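(* Let $F$ be $(\ell,\omega)$-relatively smooth on $\mathcal X\cap\mathcal S$ for some $\ell>0$, and let the stochastic oracle satisfy, for every $x\in\mathcal X$, $\mathbb{E}_{\xi}[\nabla f(x,\xi)]=\nabla F(x)$ and $\mathbb{E}_{\xi}\big[\|\nabla f(x,\xi)-\nabla F(x)\|_*^2\big]\le\sigma^2$. Run Stochastic Mirror Descent from $x_0\in\mathcal X\cap\mathcal S$: $$x_{t+1}=\arg\min_{x\in\mathcal X}\ \eta_t\big(\langle\nabla f(x_t,\xi_t),x\rangle+r(x)\big)+D_\omega(x,x_t),$$ with $\xi_0,\xi_1,\dots$ i.i.d. samples from $P$ and a non-increasing step-size sequence $\{\eta_t\}_{t\ge0}$ with $\eta_0\le 1/(2\ell)$. Let $\bar x_T$ be chosen from $x_0,\dots,x_{T-1}$ with probabilities $p_t=\eta_t/\sum_{s=0}^{T-1}\eta_s$. Then $$\mathbb{E}\big[\mathcal D_{3\ell}(\bar x_T)\big]\le\frac{3\lambda_0+6\ell\sigma^2\sum_{t=0}^{T-1}\eta_t^2}{\sum_{t=0}^{T-1}\eta_t},$$ where $\lambda_0:=\Phi_{1/\rho}(x_0)-\Phi^*+\Phi(x_0)-\Phi^*$ with $\rho=2\ell$. Moreover, with constant step-size $\eta_t=\min\{\frac{1}{2\ell},\sqrt{\lambda_0/(\sigma^2\ell T)}\}$, $$\mathbb{E}\big[\mathcal D_{3\ell}(\bar x_T)\big]=O\Big(\frac{\ell\lambda_0}{T}+\sqrt{\frac{\sigma^2\ell\lambda_0}{T}}\Big),$$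 where $O(\cdot)$ hides an absolute constant.
   Context: Let $\mathcal X\subseteq\mathbb R^d$ be closed and convex, $\|\cdot\|$ a norm on $\mathbb R^d$ with dual norm $\|z\|_*=\sup_{\|u\|\le1}\langle z,u\rangle$. The problem is $\min_{x\in\mathcal X}\Phi(x):=F(x)+r(x)$, where $F(x)=\mathbb E_{\xi\sim P}[f(x,\xi)]$ is differentiable (possibly nonconvex), $r:\mathbb R^d\to\mathbb R$ is convex, proper and lower semicontinuous, and $\Phi^*:=\inf_{x\in\mathcal X}\Phi(x)>-\infty$. A distance generating function (DGF) is a function $\omega:\mathrm{cl}(\mathcal S)\to\mathbb R$, where $\mathcal S$ is open with $\mathrm{ri}(\mathcal X)\subseteq\mathcal S$, $\omega$ is continuously differentiable on $\mathcal S$ and $1$-strongly convex w.r.t. $\|\cdot\|$ on $\mathrm{cl}(\mathcal S)$. Bregman divergence: $D_\omega(x,y)=\omega(x)-\omega(y)-\langle\nabla\omega(y),x-y\rangle$. For $\rho>0$: Bregman Moreau envelope $\Phi_{1/\rho}(x):=\min_{y\in\mathcal X}[\Phi(y)+\rho D_\omega(y,x)]$; Bregman forward–backward envelope $\mathcal D_\rho(x):=-2\rho\min_{y\in\mathcal X}Q_\rho(x,y)$ with $Q_\rho(x,y):=\langle\nabla F(x),y-x\rangle+\rho D_\omega(y,x)+r(y)-r(x)$ (minimizers in these definitions and in the algorithm are assumed to exist). $F$ is $(\ell,\omega)$-relatively smooth on $\mathcal X\cap\mathcal S$ if for all $x,y\in\mathcal X\cap\mathcal S$: $-\ell D_\omega(x,y)\le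 F(x)-F(y)-\langle\nabla F(y),x-y\rangle\le\ell D_\omega(x,y)$. *)

theory Defs
  imports "HOL-Probability.Probability"
begin

text \<open>A general norm on the ambient space (R^d is modelled by a euclidean_space type,
  whose inner product is the standard pairing).\<close>
definition is_norm :: "('a::real_vector \<Rightarrow> real) \<Rightarrow> bool" where
  "is_norm nrm \<longleftrightarrow> (\<forall>x. nrm x = 0 \<longleftrightarrow> x = 0)
     \<and> (\<forall>x y. nrm (x + y) \<le> nrm x + nrm y)
     \<and> (\<forall>c x. nrm (c *\<^sub>R x) = \<bar>c\<bar> * nrm x)"

definition dual_norm :: "('a::real_inner \<Rightarrow> real) \<Rightarrow> 'a \<Rightarrow> real" where
  "dual_norm nrm z = Sup {z \<bullet> u | u. nrm u \<le> 1}"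

definition strongly_convex_wrt ::
  "('a::real_vector \<Rightarrow> real) \<Rightarrow> real \<Rightarrow> 'a set \<Rightarrow> ('a \<Rightarrow> real) \<Rightarrow> bool" where
  "strongly_convex_wrt nrm \<mu> A \<phi> \<longleftrightarrow> convex A \<and>
     (\<forall>x\<in>A. \<forall>y\<in>A. \<forall>t\<in>{0..1}.
        \<phi> (t *\<^sub>R x + (1 - t) *\<^sub>R y)
          \<le> t * \<phi> x + (1 - t) * \<phi> y - \<mu> / 2 * t * (1 - t) * (nrm (x - y))\<^sup>2)"

definition is_DGF ::
  "('a::euclidean_space \<Rightarrow> real) \<Rightarrow> 'a set \<Rightarrow> 'a set \<Rightarrow> ('a \<Rightarrow> real) \<Rightarrow> ('a \<Rightarrow> 'a) \<Rightarrow> bool" where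
  "is_DGF nrm X S \<omega> g\<omega> \<longleftrightarrow> open S \<and> rel_interior X \<subseteq> S
     \<and> (\<forall>x\<in>S. GDERIV \<omega> x :> g\<omega> x) \<and> continuous_on S g\<omega>
     \<and> strongly_convex_wrt nrm 1 (closure S) \<omega>"

definition bregman :: "('a::real_inner \<Rightarrow> real) \<Rightarrow> ('a \<Rightarrow> 'a) \<Rightarrow> 'a \<Rightarrow> 'a \<Rightarrow> real" where
  "bregman \<omega> g\<omega> x y = \<omega> x - \<omega> y - g\<omega> y \<bullet> (x - y)"

definition rel_smooth ::
  "('a::real_inner \<Rightarrow> real) \<Rightarrow> ('a \<Rightarrow> 'a) \<Rightarrow> ('a \<Rightarrow> real) \<Rightarrow> ('a \<Rightarrow> 'a) \<Rightarrow> real \<Rightarrow> 'a set \<Rightarrow> bool" where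
  "rel_smooth F gradF \<omega> g\<omega> L A \<longleftrightarrow>
     (\<forall>x\<in>A. \<forall>y\<in>A.
        - L * bregman \<omega> g\<omega> x y \<le> F x - F y - gradF y \<bullet> (x - y)
      \<and> F x - F y - gradF y \<bullet> (x - y) \<le> L * bregman \<omega> g\<omega> x y)"

text \<open>Bregman Moreau envelope Phi_{1/rho}(x) (the min, written as Inf).\<close>
definition bregman_moreau ::
  "('a::real_inner \<Rightarrow> real) \<Rightarrow> ('a \<Rightarrow> real) \<Rightarrow> ('a \<Rightarrow> 'a) \<Rightarrow> 'a set \<Rightarrow> real \<Rightarrow> 'a \<Rightarrow> real" where
  "bregman_moreau \<Phi> \<omega> g\<omega> X \<rho> x = Inf ((\<lambda>y. \<Phi> y + \<rho> * bregman \<omega> g\<omega> y x) ` X)"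

definition fbe_Q ::
  "('a::real_inner \<Rightarrow> 'a) \<Rightarrow> ('a \<Rightarrow> real) \<Rightarrow> ('a \<Rightarrow> real) \<Rightarrow> ('a \<Rightarrow> 'a) \<Rightarrow> real \<Rightarrow> 'a \<Rightarrow> 'a \<Rightarrow> real" where
  "fbe_Q gradF r \<omega> g\<omega> \<rho> x y = gradF x \<bullet> (y - x) + \<rho> * bregman \<omega> g\<omega> y x + r y - r x"

definition bregman_fbe ::
  "('a::real_inner \<Rightarrow> 'a) \<Rightarrow> ('a \<Rightarrow> real) \<Rightarrow> ('a \<Rightarrow> real) \<Rightarrow> ('a \<Rightarrow> 'a) \<Rightarrow> 'a set \<Rightarrow> real \<Rightarrow> 'a \<Rightarrow> real" where
  "bregman_fbe gradF r \<omega> g\<omega> X \<rho> x = - 2 * \<rho> * Inf (fbe_Q gradF r \<omega> g\<omega> \<rho> x ` X)"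

text \<open>Sample-path space: xi_0, xi_1, ... i.i.d. with law P.\<close>
abbreviation sample_space :: "'b measure \<Rightarrow> (nat \<Rightarrow> 'b) measure" where
  "sample_space P \<equiv> (\<Pi>\<^sub>M i\<in>(UNIV::nat set). P)"

text \<open>All standing assumptions of the theorem together with the statement that xs are
  the Stochastic Mirror Descent iterates (x_t as a function of the sample path w,
  with xi_t = w t) started at x0 with step sizes eta.\<close>
definition SMD_instance ::
  "'a::euclidean_space set \<Rightarrow> 'a set \<Rightarrow> ('a \<Rightarrow> real) \<Rightarrow> ('a \<Rightarrow> real) \<Rightarrow> ('a \<Rightarrow> 'a)
   \<Rightarrow> ('a \<Rightarrow> 'b \<Rightarrow> real) \<Rightarrow> ('a \<Rightarrow> real) \<Rightarrow> ('a \<Rightarrow> 'a) \<Rightarrow> ('a \<Rightarrow> 'b \<Rightarrow> 'a) \<Rightarrow> 'b measure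
   \<Rightarrow> ('a \<Rightarrow> real) \<Rightarrow> real \<Rightarrow> real \<Rightarrow> 'a \<Rightarrow> (nat \<Rightarrow> real) \<Rightarrow> (nat \<Rightarrow> (nat \<Rightarrow> 'b) \<Rightarrow> 'a) \<Rightarrow> bool"
  where
  "SMD_instance X S nrm \<omega> g\<omega> f F gradF g P r L \<sigma> x0 \<eta> xs \<longleftrightarrow>
     \<comment> \<open>geometry\<close>
     closed X \<and> convex X \<and> is_norm nrm \<and> is_DGF nrm X S \<omega> g\<omega>
     \<comment> \<open>objective\<close>
   \<and> prob_space P
   \<and> (\<forall>x\<in>X. integrable P (f x) \<and> F x = (\<integral>\<xi>. f x \<xi> \<partial>P))
   \<and> (\<forall>x. GDERIV F x :> gradF x)
   \<and> convex_on UNIV r \<and> (\<forall>c. closed {x. r x \<le> c})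
   \<and> bdd_below ((\<lambda>x. F x + r x) ` X)
   \<and> L > 0 \<and> rel_smooth F gradF \<omega> g\<omega> L (X \<inter> S)
     \<comment> \<open>existence of minimizers in the envelope definitions\<close>
   \<and> (\<forall>\<rho>>0. \<forall>x\<in>X \<inter> S. \<exists>y\<in>X. \<forall>z\<in>X.
         F y + r y + \<rho> * bregman \<omega> g\<omega> y x \<le> F z + r z + \<rho> * bregman \<omega> g\<omega> z x)
   \<and> (\<forall>\<rho>>0. \<forall>x\<in>X \<inter> S. \<exists>y\<in>X. \<forall>z\<in>X.
         fbe_Q gradF r \<omega> g\<omega> \<rho> x y \<le> fbe_Q gradF r \<omega> g\<omega> \<rho> x z)
     \<comment> \<open>stochastic oracle: g x xi = gradient of f(., xi) at x, unbiased, bounded variance\<close>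
   \<and> (\<lambda>(x, \<xi>). g x \<xi>) \<in> borel_measurable (borel \<Otimes>\<^sub>M P)
   \<and> (\<forall>x\<in>X. \<forall>\<xi>\<in>space P. GDERIV (\<lambda>y. f y \<xi>) x :> g x \<xi>)
   \<and> (\<forall>x\<in>X. integrable P (g x) \<and> (\<integral>\<xi>. g x \<xi> \<partial>P) = gradF x)
   \<and> (\<forall>x\<in>X. (\<integral>\<^sup>+\<xi>. ennreal ((dual_norm nrm (g x \<xi> - gradF x))\<^sup>2) \<partial>P) \<le> ennreal (\<sigma>\<^sup>2))
     \<comment> \<open>step sizes\<close>
   \<and> (\<forall>t. 0 < \<eta> t) \<and> (\<forall>t. \<eta> (Suc t) \<le> \<eta> t) \<and> \<eta> 0 \<le> 1 / (2 * L)
     \<comment> \<open>the iterates\<close>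
   \<and> x0 \<in> X \<inter> S
   \<and> (\<forall>t. xs t \<in> borel_measurable (sample_space P))
   \<and> (\<forall>w\<in>space (sample_space P). xs 0 w = x0 \<and>
        (\<forall>t. xs (Suc t) w \<in> X \<inter> S \<and>
           (\<forall>z\<in>X. \<eta> t * (g (xs t w) (w t) \<bullet> xs (Suc t) w + r (xs (Suc t) w))
                     + bregman \<omega> g\<omega> (xs (Suc t) w) (xs t w)
                   \<le> \<eta> t * (g (xs t w) (w t) \<bullet> z + r z) + bregman \<omega> g\<omega> z (xs t w))))"

definition lambda0 ::
  "'a::real_inner set \<Rightarrow> ('a \<Rightarrow> real) \<Rightarrow> ('a \<Rightarrow> 'a) \<Rightarrow> ('a \<Rightarrow> real) \<Rightarrow> ('a \<Rightarrow> real) \<Rightarrow> real \<Rightarrow> 'a \<Rightarrow> real"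
  where
  "lambda0 X \<omega> g\<omega> F r L x0 =
     (let \<Phi> = (\<lambda>x. F x + r x); \<Phi>star = Inf (\<Phi> ` X) in
      bregman_moreau \<Phi> \<omega> g\<omega> X (2 * L) x0 - \<Phi>star + \<Phi> x0 - \<Phi>star)"

text \<open>E[D_{3l}(xbar_T)], where xbar_T = x_t with probability eta_t / sum_{s<T} eta_s,
  the index being drawn independently of the samples.\<close>
definition exp_fbe_output ::
  "'a::real_inner set \<Rightarrow> ('a \<Rightarrow> real) \<Rightarrow> ('a \<Rightarrow> 'a) \<Rightarrow> ('a \<Rightarrow> 'a) \<Rightarrow> ('a \<Rightarrow> real) \<Rightarrow> 'b measure
   \<Rightarrow> real \<Rightarrow> (nat \<Rightarrow> real) \<Rightarrow> (nat \<Rightarrow> (nat \<Rightarrow> 'b) \<Rightarrow> 'a) \<Rightarrow> nat \<Rightarrow> ennreal" where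
  "exp_fbe_output X \<omega> g\<omega> gradF r P L \<eta> xs T =
     (\<Sum>t<T. ennreal (\<eta> t / (\<Sum>s<T. \<eta> s)) *
        (\<integral>\<^sup>+w. ennreal (bregman_fbe gradF r \<omega> g\<omega> X (3 * L) (xs t w)) \<partial>sample_space P))"

end

theory Submission
  imports Defs
begin

(*
  With rho = 2 l, the potential V_t = Phi_{1/rho}(x_t) - Phi_min + rho eta_t (Phi(x_t) - Phi_min) drops along
  one mirror step by at least eta_t/3 D_{3l}(x_t), up to two noise terms.  Comparing x_{t+1} with the
  Bregman-Moreau point y of x_t (three-point inequality and relative smoothness) and with the noise-free
  step xhat_t, whose distance to x_{t+1} is at most eta_t |delta_t|_* for the gradient noise delta_t, gives
    V_{t+1} + eta_t/3 D_{3l}(x_t) <= V_t + rho eta_t <delta_t, y - xhat_t> + rho eta_t^2 |delta_t|_*^2,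
  where D_{3l} <= 6 l (Phi - Phi_{1/rho}) turns the Moreau gap into the envelope.  Since y and xhat_t
  depend on x_t only, the cross term has mean zero over xi_t, and telescoping the expectations yields
  sum_t eta_t E[D_{3l}(x_t)] <= 3 (V_0 + rho sigma^2 sum_t eta_t^2) with V_0 <= lambda_0.  The envelopes
  are infima over X and need not be measurable, so all expectations are lower integrals, which are
  superadditive and can be disintegrated one sample at a time.
*)

section \<open>Lower integrals\<close>

lemma nn_integral_cmult_nonmeasurable:
  fixes f :: "'a \<Rightarrow> ennreal"
  assumes "c \<noteq> \<infinity>"
  shows "(\<integral>\<^sup>+x. c * f x \<partial>M) = c * (\<integral>\<^sup>+x. f x \<partial>M)"
proof -
  have le: "d * (\<integral>\<^sup>+x. h x \<partial>M) \<le> (\<integral>\<^sup>+x. d * h x \<partial>M)" for d and h :: "'a \<Rightarrow> ennreal"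
  proof -
    have "d * (\<integral>\<^sup>+x. h x \<partial>M) = (SUP s \<in> {s. simple_function M s \<and> s \<le> h}. d * integral\<^sup>S M s)"
      unfolding nn_integral_def[of M h] by (simp add: SUP_mult_left_ennreal)
    also have "\<dots> \<le> (\<integral>\<^sup>+x. d * h x \<partial>M)"
    proof (rule SUP_least, safe)
      fix s assume s: "simple_function M s" and "s \<le> h"
      have "d * integral\<^sup>S M s = (\<integral>\<^sup>+x. d * s x \<partial>M)"
        using s by (simp add: nn_integral_eq_simple_integral nn_integral_cmult borel_measurable_simple_function)
      also have "\<dots> \<le> (\<integral>\<^sup>+x. d * h x \<partial>M)"
        using \<open>s \<le> h\<close> by (intro nn_integral_mono) (auto simp: le_fun_def intro: mult_left_mono)
      finally show "d * integral\<^sup>S M s \<le> \<dots>" .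
    qed
    finally show ?thesis .
  qed
  show ?thesis
  proof (cases "c = 0")
    case False
    then have inv: "c * inverse c = 1" "inverse c * c = 1"
      using ennreal_divide_self[of c] assms by (simp_all add: divide_ennreal_def top.not_eq_extremum mult.commute)
    have "inverse c * (\<integral>\<^sup>+x. c * f x \<partial>M) \<le> (\<integral>\<^sup>+x. f x \<partial>M)"
      using le[of "inverse c" "\<lambda>x. c * f x"] by (simp add: mult.assoc[symmetric] inv)
    then have "c * (inverse c * (\<integral>\<^sup>+x. c * f x \<partial>M)) \<le> c * (\<integral>\<^sup>+x. f x \<partial>M)"
      by (rule mult_left_mono) simp
    then have "(\<integral>\<^sup>+x. c * f x \<partial>M) \<le> c * (\<integral>\<^sup>+x. f x \<partial>M)"
      by (simp add: mult.assoc[symmetric] inv)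
    with le show ?thesis by (rule antisym[rotated])
  qed simp
qed

lemma nn_integral_add_superadditive:
  fixes f h :: "'a \<Rightarrow> ennreal"
  shows "(\<integral>\<^sup>+x. f x \<partial>M) + (\<integral>\<^sup>+x. h x \<partial>M) \<le> (\<integral>\<^sup>+x. f x + h x \<partial>M)"
proof -
  have ne: "{s. simple_function M s \<and> s \<le> k} \<noteq> {}" for k :: "'a \<Rightarrow> ennreal"
    by (auto intro!: exI[of _ "\<lambda>_. 0"] simp: le_fun_def)
  have "integral\<^sup>S M a + integral\<^sup>S M b \<le> (\<integral>\<^sup>+x. f x + h x \<partial>M)"
    if a: "simple_function M a" "a \<le> f" and b: "simple_function M b" "b \<le> h" for a b
  proof -
    have "integral\<^sup>S M a + integral\<^sup>S M b = (\<integral>\<^sup>+x. a x + b x \<partial>M)"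
      using a b by (simp add: nn_integral_eq_simple_integral[symmetric] nn_integral_add
          borel_measurable_simple_function)
    also have "\<dots> \<le> (\<integral>\<^sup>+x. f x + h x \<partial>M)"
      using a b by (intro nn_integral_mono) (auto simp: le_fun_def intro: add_mono)
    finally show ?thesis .
  qed
  then have "(SUP a \<in> {s. simple_function M s \<and> s \<le> f}. integral\<^sup>S M a) + integral\<^sup>S M b
      \<le> (\<integral>\<^sup>+x. f x + h x \<partial>M)" if "simple_function M b" "b \<le> h" for b
    unfolding ennreal_SUP_add_left[OF ne, symmetric] using that by (auto intro!: SUP_least)
  then show ?thesis
    unfolding nn_integral_def[of M f] nn_integral_def[of M h] ennreal_SUP_add_right[OF ne]
    by (auto intro!: SUP_least)
qed

lemma nn_integral_sum_superadditive:
  fixes f :: "'i \<Rightarrow> 'a \<Rightarrow> ennreal"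
  shows "(\<Sum>i\<in>I. \<integral>\<^sup>+x. f i x \<partial>M) \<le> (\<integral>\<^sup>+x. (\<Sum>i\<in>I. f i x) \<partial>M)"
proof (induction I rule: infinite_finite_induct)
  case (insert i I)
  then have "(\<Sum>j\<in>insert i I. \<integral>\<^sup>+x. f j x \<partial>M) \<le> (\<integral>\<^sup>+x. f i x \<partial>M) + (\<integral>\<^sup>+x. (\<Sum>j\<in>I. f j x) \<partial>M)"
    by (simp add: add_left_mono)
  also have "\<dots> \<le> (\<integral>\<^sup>+x. (\<Sum>j\<in>insert i I. f j x) \<partial>M)"
    using nn_integral_add_superadditive insert.hyps by simp
  finally show ?case .
qed simp_all

lemma nn_integral_PiM_fun_upd:
  fixes h :: "('i \<Rightarrow> 'a) \<Rightarrow> ennreal"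
  assumes P: "prob_space P" and h: "h \<in> borel_measurable (\<Pi>\<^sub>M i\<in>UNIV. P)"
  shows "(\<integral>\<^sup>+w. h w \<partial>(\<Pi>\<^sub>M i\<in>UNIV. P))
       = (\<integral>\<^sup>+w. (\<integral>\<^sup>+\<xi>. h (w(t := \<xi>)) \<partial>P) \<partial>(\<Pi>\<^sub>M i\<in>UNIV. P))"
proof -
  let ?\<Omega> = "\<Pi>\<^sub>M i\<in>UNIV. P"
  interpret \<Omega>: prob_space ?\<Omega> using P by (intro prob_space_PiM) auto
  interpret P: prob_space P by fact
  interpret P\<Omega>: pair_sigma_finite P ?\<Omega> by unfold_locales
  have "(\<lambda>z. (snd z)(t := fst z)) \<in> measurable (P \<Otimes>\<^sub>M ?\<Omega>) ?\<Omega>"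
    by (rule measurable_fun_upd[where J=UNIV]) auto
  then have upd: "(\<lambda>(\<xi>, w). w(t := \<xi>)) \<in> measurable (P \<Otimes>\<^sub>M ?\<Omega>) ?\<Omega>"
    by (simp add: case_prod_beta)
  have "(\<integral>\<^sup>+w. h w \<partial>?\<Omega>) = (\<integral>\<^sup>+w. h w \<partial>distr (P \<Otimes>\<^sub>M ?\<Omega>) ?\<Omega> (\<lambda>(\<xi>, w). w(t := \<xi>)))"
    using distr_pair_PiM_eq_PiM[of UNIV "\<lambda>_. P" t] P by simp
  also have "\<dots> = (\<integral>\<^sup>+(\<xi>, w). h (w(t := \<xi>)) \<partial>(P \<Otimes>\<^sub>M ?\<Omega>))"
    using upd h by (simp add: nn_integral_distr split_beta')
  also have "\<dots> = (\<integral>\<^sup>+w. (\<integral>\<^sup>+\<xi>. h (w(t := \<xi>)) \<partial>P) \<partial>?\<Omega>)"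
    using P\<Omega>.nn_integral_snd[symmetric, of "\<lambda>(\<xi>, w). h (w(t := \<xi>))"] upd h
    by (simp add: case_prod_beta measurable_comp split_beta')
  finally show ?thesis .
qed

lemma nn_integral_PiM_fun_upd_le:
  fixes h :: "('i \<Rightarrow> 'a) \<Rightarrow> ennreal"
  assumes P: "prob_space P"
  shows "(\<integral>\<^sup>+w. h w \<partial>(\<Pi>\<^sub>M i\<in>UNIV. P))
       \<le> (\<integral>\<^sup>+w. (\<integral>\<^sup>+\<xi>. h (w(t := \<xi>)) \<partial>P) \<partial>(\<Pi>\<^sub>M i\<in>UNIV. P))"
  unfolding nn_integral_def[of "\<Pi>\<^sub>M i\<in>UNIV. P" h]
proof (rule SUP_least, safe)
  fix s assume s: "simple_function (\<Pi>\<^sub>M i\<in>UNIV. P) s" and "s \<le> h"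
  have "integral\<^sup>S (\<Pi>\<^sub>M i\<in>UNIV. P) s = (\<integral>\<^sup>+w. (\<integral>\<^sup>+\<xi>. s (w(t := \<xi>)) \<partial>P) \<partial>(\<Pi>\<^sub>M i\<in>UNIV. P))"
    using s by (simp add: nn_integral_eq_simple_integral[symmetric] nn_integral_PiM_fun_upd[OF P]
        borel_measurable_simple_function)
  also have "\<dots> \<le> (\<integral>\<^sup>+w. (\<integral>\<^sup>+\<xi>. h (w(t := \<xi>)) \<partial>P) \<partial>(\<Pi>\<^sub>M i\<in>UNIV. P))"
    using \<open>s \<le> h\<close> by (intro nn_integral_mono) (auto simp: le_fun_def)
  finally show "integral\<^sup>S (\<Pi>\<^sub>M i\<in>UNIV. P) s \<le> \<dots>" .
qed

lemma (in prob_space) nn_integral_le_of_mean_zero_bound: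
  assumes N: "integrable M N" "(\<integral>\<xi>. N \<xi> \<partial>M) = 0" and V: "integrable M V" "(\<integral>\<xi>. V \<xi> \<partial>M) \<le> s"
    and b: "0 \<le> b" and Y: "\<And>\<xi>. \<xi> \<in> space M \<Longrightarrow> 0 \<le> Y \<xi>"
      "\<And>\<xi>. \<xi> \<in> space M \<Longrightarrow> Y \<xi> \<le> c + N \<xi> + b * V \<xi>"
  shows "(\<integral>\<^sup>+\<xi>. ennreal (Y \<xi>) \<partial>M) \<le> ennreal (c + b * s)"
proof -
  have int: "integrable M (\<lambda>\<xi>. c + N \<xi> + b * V \<xi>)" using N V by simp
  have "(\<integral>\<^sup>+\<xi>. ennreal (Y \<xi>) \<partial>M) \<le> (\<integral>\<^sup>+\<xi>. ennreal (c + N \<xi> + b * V \<xi>) \<partial>M)"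
    using Y(2) by (intro nn_integral_mono ennreal_leI)
  also have "\<dots> = ennreal (\<integral>\<xi>. c + N \<xi> + b * V \<xi> \<partial>M)"
    using Y by (intro nn_integral_eq_integral[OF int] AE_I2) (meson order_trans)
  also have "(\<integral>\<xi>. c + N \<xi> + b * V \<xi> \<partial>M) = c + b * (\<integral>\<xi>. V \<xi> \<partial>M)"
    using N V by (simp add: prob_space)
  also have "\<dots> \<le> c + b * s" using V(2) b by (simp add: mult_left_mono)
  finally show ?thesis by (simp add: ennreal_leI)
qed

lemma fun_upd_in_space_PiM:
  "w \<in> space (\<Pi>\<^sub>M i\<in>UNIV. M) \<Longrightarrow> \<xi> \<in> space M \<Longrightarrow> w(t := \<xi>) \<in> space (\<Pi>\<^sub>M i\<in>UNIV. M)"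
  by (simp add: space_PiM PiE_def Pi_def)

section \<open>Norms and dual norms\<close>

lemma is_norm_zero: "is_norm nrm \<Longrightarrow> nrm 0 = 0"
  by (simp add: is_norm_def)

lemma is_norm_triangle: "is_norm nrm \<Longrightarrow> nrm (x + y) \<le> nrm x + nrm y"
  by (simp add: is_norm_def)

lemma is_norm_scaleR: "is_norm nrm \<Longrightarrow> nrm (c *\<^sub>R x) = \<bar>c\<bar> * nrm x"
  by (simp add: is_norm_def)

lemma is_norm_eq_0_iff: "is_norm nrm \<Longrightarrow> nrm x = 0 \<longleftrightarrow> x = 0"
  by (simp add: is_norm_def)

lemma is_norm_minus_commute: "is_norm nrm \<Longrightarrow> nrm (x - y) = nrm (y - x)"
  using is_norm_scaleR[of nrm "-1" "x - y"] by simp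

lemma is_norm_nonneg: "is_norm nrm \<Longrightarrow> 0 \<le> nrm x"
  using is_norm_triangle[of nrm x "-x"] is_norm_zero[of nrm] is_norm_minus_commute[of nrm 0 x] by simp

lemma convex_on_is_norm:
  assumes "is_norm nrm"
  shows "convex_on UNIV nrm"
proof (rule convex_onI)
  fix t :: real and x y assume "0 < t" "t < 1"
  then show "nrm ((1 - t) *\<^sub>R x + t *\<^sub>R y) \<le> (1 - t) * nrm x + t * nrm y"
    using is_norm_triangle[OF assms, of "(1 - t) *\<^sub>R x" "t *\<^sub>R y"] by (simp add: is_norm_scaleR[OF assms])
qed simp

lemma is_norm_lower_bound:
  fixes nrm :: "'a::euclidean_space \<Rightarrow> real"
  assumes n: "is_norm nrm"
  obtains c where "0 < c" "\<And>x. c * norm x \<le> nrm x"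
proof -
  have "sphere (0::'a) 1 \<noteq> {}"
    using vector_choose_size[of 1] by auto
  moreover have "continuous_on (sphere 0 1) nrm"
    by (rule continuous_on_subset[OF convex_on_continuous[OF open_UNIV convex_on_is_norm[OF n]]]) simp
  ultimately obtain u where u: "u \<in> sphere 0 1" and umin: "\<And>y. y \<in> sphere 0 1 \<Longrightarrow> nrm u \<le> nrm y"
    using continuous_attains_inf[of "sphere 0 1" nrm] by auto
  have "nrm u * norm x \<le> nrm x" for x
  proof (cases "x = 0")
    case False
    then have "nrm u \<le> nrm ((1 / norm x) *\<^sub>R x)" by (intro umin) simp
    then show ?thesis using False by (simp add: is_norm_scaleR[OF n] field_simps)
  qed (simp add: is_norm_zero[OF n])
  moreover have "0 < nrm u"
    using u is_norm_nonneg[OF n, of u] is_norm_eq_0_iff[OF n, of u] by fastforce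
  ultimately show ?thesis using that by blast
qed

lemma bdd_above_dual_norm:
  fixes nrm :: "'a::euclidean_space \<Rightarrow> real"
  assumes n: "is_norm nrm"
  shows "bdd_above {z \<bullet> u | u. nrm u \<le> 1}"
proof -
  obtain c where c: "0 < c" "\<And>x. c * norm x \<le> nrm x" using is_norm_lower_bound[OF n] by blast
  have "z \<bullet> u \<le> norm z / c" if "nrm u \<le> 1" for u
  proof -
    have "norm u \<le> 1 / c" using c(2)[of u] that c(1) by (simp add: field_simps)
    then have "norm z * norm u \<le> norm z / c" by (simp add: mult_left_mono divide_inverse)
    then show ?thesis using norm_cauchy_schwarz[of z u] by linarith
  qed
  then show ?thesis by (auto intro!: bdd_aboveI[of _ "norm z / c"])
qed

lemma inner_le_dual_norm:
  fixes nrm :: "'a::euclidean_space \<Rightarrow> real"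
  assumes "is_norm nrm" "nrm u \<le> 1"
  shows "z \<bullet> u \<le> dual_norm nrm z"
  unfolding dual_norm_def using assms by (intro cSup_upper bdd_above_dual_norm) auto

lemma inner_le_dual_norm_mult:
  fixes nrm :: "'a::euclidean_space \<Rightarrow> real"
  assumes n: "is_norm nrm"
  shows "z \<bullet> u \<le> dual_norm nrm z * nrm u"
proof (cases "u = 0")
  case False
  then have p: "0 < nrm u" using is_norm_nonneg[OF n, of u] is_norm_eq_0_iff[OF n, of u] by linarith
  then have "z \<bullet> ((1 / nrm u) *\<^sub>R u) \<le> dual_norm nrm z"
    by (intro inner_le_dual_norm[OF n]) (simp add: is_norm_scaleR[OF n])
  then show ?thesis using p by (simp add: field_simps)
qed (simp add: is_norm_zero[OF n])

lemma dual_norm_nonneg: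
  fixes nrm :: "'a::euclidean_space \<Rightarrow> real"
  assumes n: "is_norm nrm"
  shows "0 \<le> dual_norm nrm z"
  using inner_le_dual_norm[OF n, of 0 z] by (simp add: is_norm_zero[OF n])

lemma convex_on_dual_norm:
  fixes nrm :: "'a::euclidean_space \<Rightarrow> real"
  assumes n: "is_norm nrm"
  shows "convex_on UNIV (dual_norm nrm)"
proof (rule convex_onI)
  fix t :: real and y z assume t: "0 < t" "t < 1"
  show "dual_norm nrm ((1 - t) *\<^sub>R y + t *\<^sub>R z) \<le> (1 - t) * dual_norm nrm y + t * dual_norm nrm z"
    unfolding dual_norm_def[of nrm "(1 - t) *\<^sub>R y + t *\<^sub>R z"]
  proof (rule cSup_least)
    show "{((1 - t) *\<^sub>R y + t *\<^sub>R z) \<bullet> u | u. nrm u \<le> 1} \<noteq> {}"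
      using is_norm_zero[OF n] by (auto intro!: exI[of _ 0])
  next
    fix s assume "s \<in> {((1 - t) *\<^sub>R y + t *\<^sub>R z) \<bullet> u | u. nrm u \<le> 1}"
    then obtain u where s: "s = ((1 - t) *\<^sub>R y + t *\<^sub>R z) \<bullet> u" and "nrm u \<le> 1" by blast
    then have "y \<bullet> u \<le> dual_norm nrm y" "z \<bullet> u \<le> dual_norm nrm z"
      by (simp_all add: inner_le_dual_norm[OF n])
    then show "s \<le> (1 - t) * dual_norm nrm y + t * dual_norm nrm z"
      unfolding s using t by (simp add: inner_add_left add_mono mult_left_mono)
  qed
qed simp

lemma continuous_on_dual_norm:
  fixes nrm :: "'a::euclidean_space \<Rightarrow> real"
  shows "is_norm nrm \<Longrightarrow> continuous_on UNIV (dual_norm nrm)"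
  by (rule convex_on_continuous[OF open_UNIV convex_on_dual_norm])

section \<open>Bregman divergences and strong convexity\<close>

lemma convex_on_inner: "convex A \<Longrightarrow> convex_on A (\<lambda>z. v \<bullet> z)"
  by (rule convex_onI) (simp_all add: inner_add_right)

lemma convex_on_bregman:
  assumes "convex_on A \<omega>"
  shows "convex_on A (\<lambda>z. bregman \<omega> g\<omega> z x)"
proof (rule convex_onI)
  fix t :: real and a b assume "0 < t" "t < 1" "a \<in> A" "b \<in> A"
  then show "bregman \<omega> g\<omega> ((1 - t) *\<^sub>R a + t *\<^sub>R b) x \<le> (1 - t) * bregman \<omega> g\<omega> a x + t * bregman \<omega> g\<omega> b x"
    using convex_onD[OF assms, of t a b] by (simp add: bregman_def algebra_simps inner_diff_right)
qed (use assms convex_on_imp_convex in blast)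

lemma strongly_convex_wrt_imp_convex_on:
  assumes sc: "strongly_convex_wrt nrm \<mu> A \<phi>" and "0 \<le> \<mu>"
  shows "convex_on A \<phi>"
proof (rule convex_onI)
  fix t :: real and x y assume "0 < t" "t < 1" "x \<in> A" "y \<in> A"
  moreover have "0 \<le> \<mu> / 2 * t * (1 - t) * (nrm (y - x))\<^sup>2"
    using \<open>0 \<le> \<mu>\<close> \<open>0 < t\<close> \<open>t < 1\<close> by simp
  ultimately show "\<phi> ((1 - t) *\<^sub>R x + t *\<^sub>R y) \<le> (1 - t) * \<phi> x + t * \<phi> y"
    using sc unfolding strongly_convex_wrt_def by (smt (verit) add.commute atLeastAtMost_iff)
qed (use sc in \<open>simp add: strongly_convex_wrt_def\<close>)

lemma strongly_convex_wrt_subset: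
  "strongly_convex_wrt nrm \<mu> A \<phi> \<Longrightarrow> B \<subseteq> A \<Longrightarrow> convex B \<Longrightarrow> strongly_convex_wrt nrm \<mu> B \<phi>"
  by (auto simp: strongly_convex_wrt_def)

lemma strongly_convex_wrt_add_convex:
  assumes sc: "strongly_convex_wrt nrm \<mu> A \<phi>" and cv: "convex_on A \<psi>"
  shows "strongly_convex_wrt nrm \<mu> A (\<lambda>z. \<phi> z + \<psi> z)"
  unfolding strongly_convex_wrt_def
proof (intro conjI ballI)
  show "convex A" using sc by (simp add: strongly_convex_wrt_def)
  fix x y t assume "x \<in> A" "y \<in> A" "t \<in> {0..1::real}"
  moreover have "\<psi> (t *\<^sub>R x + (1 - t) *\<^sub>R y) \<le> t * \<psi> x + (1 - t) * \<psi> y"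
    using convex_onD[OF cv, of "1 - t" x y] calculation by simp
  ultimately show "\<phi> (t *\<^sub>R x + (1 - t) *\<^sub>R y) + \<psi> (t *\<^sub>R x + (1 - t) *\<^sub>R y)
      \<le> t * (\<phi> x + \<psi> x) + (1 - t) * (\<phi> y + \<psi> y) - \<mu> / 2 * t * (1 - t) * (nrm (x - y))\<^sup>2"
    using sc unfolding strongly_convex_wrt_def by (fastforce simp: algebra_simps)
qed

lemma strongly_convex_wrt_bregman:
  assumes sc: "strongly_convex_wrt nrm \<mu> A \<omega>"
  shows "strongly_convex_wrt nrm \<mu> A (\<lambda>z. bregman \<omega> g\<omega> z x)"
  unfolding strongly_convex_wrt_def
proof (intro conjI ballI)
  show "convex A" using sc by (simp add: strongly_convex_wrt_def)
  fix a b t assume "a \<in> A" "b \<in> A" "t \<in> {0..1::real}"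
  then have "\<omega> (t *\<^sub>R a + (1 - t) *\<^sub>R b) \<le> t * \<omega> a + (1 - t) * \<omega> b - \<mu> / 2 * t * (1 - t) * (nrm (a - b))\<^sup>2"
    using sc unfolding strongly_convex_wrt_def by blast
  then show "bregman \<omega> g\<omega> (t *\<^sub>R a + (1 - t) *\<^sub>R b) x
      \<le> t * bregman \<omega> g\<omega> a x + (1 - t) * bregman \<omega> g\<omega> b x - \<mu> / 2 * t * (1 - t) * (nrm (a - b))\<^sup>2"
    by (simp add: bregman_def algebra_simps inner_diff_right inner_add_right)
qed

lemma le_of_le_add_vanishing:
  fixes a b :: real and q :: "real \<Rightarrow> real"
  assumes q: "(q \<longlongrightarrow> 0) (at_right 0)" and le: "\<And>s. 0 < s \<Longrightarrow> s < 1 \<Longrightarrow> a \<le> b + q s"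
  shows "a \<le> b"
proof -
  have "((\<lambda>s. b + q s) \<longlongrightarrow> b + 0) (at_right 0)" by (intro tendsto_intros q)
  moreover have "eventually (\<lambda>s. a \<le> b + q s) (at_right (0::real))"
    unfolding eventually_at_right[OF zero_less_one] by (intro exI[of _ 1]) (auto intro: le)
  ultimately show ?thesis
    using tendsto_lowerbound[of "\<lambda>s. b + q s" "b + 0" "at_right (0::real)" a] by simp
qed

lemma strongly_convex_wrt_argmin:
  assumes sc: "strongly_convex_wrt nrm \<mu> A h"
    and m: "m \<in> A" and mmin: "\<And>z. z \<in> A \<Longrightarrow> h m \<le> h z" and z: "z \<in> A"
  shows "h m + \<mu> / 2 * (nrm (z - m))\<^sup>2 \<le> h z"
proof -
  define n where "n = \<mu> / 2 * (nrm (z - m))\<^sup>2"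
  have approx: "n \<le> h z - h m + s * n" if s: "0 < s" "s < 1" for s
  proof -
    have "s *\<^sub>R z + (1 - s) *\<^sub>R m \<in> A"
      using sc m z s by (simp add: strongly_convex_wrt_def convex_def)
    then have "h m \<le> h (s *\<^sub>R z + (1 - s) *\<^sub>R m)" by (rule mmin)
    also have "\<dots> \<le> s * h z + (1 - s) * h m - \<mu> / 2 * s * (1 - s) * (nrm (z - m))\<^sup>2"
      using sc m z s unfolding strongly_convex_wrt_def by simp
    also have "\<dots> = s * h z + (1 - s) * h m - s * (1 - s) * n"
      by (simp add: n_def)
    finally have "s * ((1 - s) * n) \<le> s * (h z - h m)" by (simp add: algebra_simps)
    then have "(1 - s) * n \<le> h z - h m" using s by simp
    then show ?thesis by (simp add: algebra_simps)
  qed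
  have "((\<lambda>s. s * n) \<longlongrightarrow> 0) (at_right 0)" by (intro tendsto_mult_left_zero tendsto_ident_at)
  then have "n \<le> h z - h m" using approx by (rule le_of_le_add_vanishing)
  then show ?thesis by (simp add: n_def)
qed

lemma strongly_convex_wrt_argmin_unique:
  assumes n: "is_norm nrm" and sc: "strongly_convex_wrt nrm \<mu> A h" and "0 < \<mu>"
    and a: "a \<in> A" "\<And>z. z \<in> A \<Longrightarrow> h a \<le> h z"
    and b: "b \<in> A" "\<And>z. z \<in> A \<Longrightarrow> h b \<le> h z"
  shows "a = b"
proof -
  have "h a + \<mu> / 2 * (nrm (b - a))\<^sup>2 \<le> h b" by (rule strongly_convex_wrt_argmin[OF sc a b(1)])
  with b(2)[OF a(1)] have "\<mu> / 2 * (nrm (b - a))\<^sup>2 \<le> 0" by linarith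
  with \<open>0 < \<mu>\<close> have "nrm (b - a) = 0" by (simp add: mult_le_0_iff)
  then show ?thesis using is_norm_eq_0_iff[OF n] by simp
qed

lemma bregman_self [simp]: "bregman \<omega> g\<omega> x x = 0"
  by (simp add: bregman_def)

lemma tendsto_bregman_segment:
  fixes \<omega> :: "'a::real_inner \<Rightarrow> real"
  assumes d: "GDERIV \<omega> x :> g\<omega> x"
  shows "((\<lambda>s. bregman \<omega> g\<omega> (x + s *\<^sub>R (z - x)) x / s) \<longlongrightarrow> 0) (at_right 0)"
proof -
  let ?D = "(z - x) \<bullet> g\<omega> x"
  have p: "((\<lambda>s::real. x + s *\<^sub>R (z - x)) has_derivative (\<lambda>s. s *\<^sub>R (z - x))) (at 0)"
    by (auto intro!: derivative_eq_intros)
  have d': "(\<omega> has_derivative (\<lambda>h. h \<bullet> g\<omega> x)) (at (x + 0 *\<^sub>R (z - x)))"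
    using d by (simp add: gderiv_def)
  have "((\<lambda>s. \<omega> (x + s *\<^sub>R (z - x))) has_derivative (\<lambda>s. (s *\<^sub>R (z - x)) \<bullet> g\<omega> x)) (at 0)"
    using has_derivative_compose[OF p d'] by (simp add: o_def)
  moreover have "(\<lambda>s. (s *\<^sub>R (z - x)) \<bullet> g\<omega> x) = (*) ?D" by (auto simp: mult.commute)
  ultimately have "((\<lambda>s. \<omega> (x + s *\<^sub>R (z - x))) has_field_derivative ?D) (at 0)"
    by (simp add: has_field_derivative_def)
  then have "((\<lambda>s. (\<omega> (x + s *\<^sub>R (z - x)) - \<omega> (x + 0 *\<^sub>R (z - x))) / (s - 0)) \<longlongrightarrow> ?D) (at 0)"
    by (simp only: has_field_derivative_iff)
  then have "((\<lambda>s. (\<omega> (x + s *\<^sub>R (z - x)) - \<omega> x) / s) \<longlongrightarrow> ?D) (at_right 0)"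
    by (auto intro: tendsto_mono[OF at_within_le_at])
  then have "((\<lambda>s. (\<omega> (x + s *\<^sub>R (z - x)) - \<omega> x) / s - ?D) \<longlongrightarrow> ?D - ?D) (at_right 0)"
    by (intro tendsto_intros)
  then have "((\<lambda>s. (\<omega> (x + s *\<^sub>R (z - x)) - \<omega> x) / s - ?D) \<longlongrightarrow> 0) (at_right 0)" by simp
  moreover have "eventually (\<lambda>s. (\<omega> (x + s *\<^sub>R (z - x)) - \<omega> x) / s - ?D
      = bregman \<omega> g\<omega> (x + s *\<^sub>R (z - x)) x / s) (at_right (0::real))"
    unfolding eventually_at_right[OF zero_less_one]
    by (intro exI[of _ 1]) (auto simp: bregman_def divide_simps inner_diff_right inner_commute algebra_simps)
  ultimately show ?thesis by (rule Lim_transform_eventually)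
qed

lemma bregman_nonneg:
  assumes cv: "convex_on A \<omega>" and x: "x \<in> A" and z: "z \<in> A" and d: "GDERIV \<omega> x :> g\<omega> x"
  shows "0 \<le> bregman \<omega> g\<omega> z x"
proof -
  have approx: "0 \<le> bregman \<omega> g\<omega> z x + - (bregman \<omega> g\<omega> (x + s *\<^sub>R (z - x)) x / s)" if s: "0 < s" "s < 1" for s
  proof -
    have "bregman \<omega> g\<omega> (x + s *\<^sub>R (z - x)) x \<le> s * bregman \<omega> g\<omega> z x"
      using convex_onD[OF convex_on_bregman[OF cv, of g\<omega> x], of s x z] x z s
      by (simp add: algebra_simps bregman_def)
    then show ?thesis using s by (simp add: field_simps)
  qed
  have lim: "((\<lambda>s. - (bregman \<omega> g\<omega> (x + s *\<^sub>R (z - x)) x / s)) \<longlongrightarrow> 0) (at_right 0)"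
    using tendsto_minus[OF tendsto_bregman_segment[of \<omega> x g\<omega> z, OF d]] by simp
  show ?thesis by (rule le_of_le_add_vanishing[OF lim approx])
qed

lemma bregman_three_point:
  assumes A: "convex A" and \<psi>: "convex_on A \<psi>" and m: "m \<in> A" and d: "GDERIV \<omega> m :> g\<omega> m"
    and mmin: "\<And>z. z \<in> A \<Longrightarrow> \<psi> m + bregman \<omega> g\<omega> m x \<le> \<psi> z + bregman \<omega> g\<omega> z x" and z: "z \<in> A"
  shows "\<psi> m + bregman \<omega> g\<omega> m x + bregman \<omega> g\<omega> z m \<le> \<psi> z + bregman \<omega> g\<omega> z x"
proof -
  define \<phi> where "\<phi> y = \<psi> y + bregman \<omega> g\<omega> y x - bregman \<omega> g\<omega> y m" for y
  have \<phi>m: "\<phi> m = \<psi> m + bregman \<omega> g\<omega> m x" by (simp add: \<phi>_def)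
  have approx: "\<phi> m \<le> \<phi> z + bregman \<omega> g\<omega> (m + s *\<^sub>R (z - m)) m / s" if s: "0 < s" "s < 1" for s
  proof -
    let ?zs = "m + s *\<^sub>R (z - m)"
    have zs: "?zs = (1 - s) *\<^sub>R m + s *\<^sub>R z" by (simp add: algebra_simps)
    then have "?zs \<in> A" using A m z s by (simp add: convex_def)
    then have "\<phi> m \<le> \<phi> ?zs + bregman \<omega> g\<omega> ?zs m" using mmin \<phi>m by (simp add: \<phi>_def)
    also have "\<phi> ?zs \<le> (1 - s) * \<phi> m + s * \<phi> z"
      \<comment> \<open>\<phi> differs from \<psi> by an affine function\<close>
      using convex_onD[OF \<psi>, of s m z] m z s unfolding zs
      by (simp add: \<phi>_def bregman_def algebra_simps inner_diff_right inner_add_right)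
    finally have "s * \<phi> m \<le> s * \<phi> z + bregman \<omega> g\<omega> ?zs m" by (simp add: algebra_simps)
    then show ?thesis using s by (simp add: field_simps)
  qed
  have "\<phi> m \<le> \<phi> z"
    by (rule le_of_le_add_vanishing[OF tendsto_bregman_segment[of \<omega> m g\<omega> z, OF d] approx])
  then show ?thesis by (simp add: \<phi>_def)
qed

lemma strongly_convex_wrt_argmin_stability:
  fixes \<phi> :: "'a::euclidean_space \<Rightarrow> real"
  assumes n: "is_norm nrm" and sc: "strongly_convex_wrt nrm 1 A \<phi>" and \<eta>: "0 \<le> \<eta>"
    and p: "p \<in> A" "\<And>z. z \<in> A \<Longrightarrow> \<phi> p + \<eta> * (v \<bullet> p) \<le> \<phi> z + \<eta> * (v \<bullet> z)"
    and q: "q \<in> A" "\<And>z. z \<in> A \<Longrightarrow> \<phi> q + \<eta> * (w \<bullet> q) \<le> \<phi> z + \<eta> * (w \<bullet> z)"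
  shows "(v - w) \<bullet> (q - p) \<le> \<eta> * (dual_norm nrm (v - w))\<^sup>2"
proof -
  have "convex A" using sc by (simp add: strongly_convex_wrt_def)
  then have sc_lin: "strongly_convex_wrt nrm 1 A (\<lambda>z. \<phi> z + \<eta> * (u \<bullet> z))" for u
    by (intro strongly_convex_wrt_add_convex[OF sc] convex_on_cmul[OF \<eta>] convex_on_inner)
  have "\<phi> p + \<eta> * (v \<bullet> p) + 1 / 2 * (nrm (q - p))\<^sup>2 \<le> \<phi> q + \<eta> * (v \<bullet> q)"
    using strongly_convex_wrt_argmin[OF sc_lin p q(1)] by simp
  moreover have "\<phi> q + \<eta> * (w \<bullet> q) + 1 / 2 * (nrm (p - q))\<^sup>2 \<le> \<phi> p + \<eta> * (w \<bullet> p)"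
    using strongly_convex_wrt_argmin[OF sc_lin q p(1)] by simp
  ultimately have sq: "(nrm (q - p))\<^sup>2 \<le> \<eta> * ((v - w) \<bullet> (q - p))"
    using is_norm_minus_commute[OF n, of p q] by (simp add: algebra_simps inner_diff_left inner_diff_right)
  have cs: "(v - w) \<bullet> (q - p) \<le> dual_norm nrm (v - w) * nrm (q - p)"
    by (rule inner_le_dual_norm_mult[OF n])
  have "nrm (q - p) \<le> \<eta> * dual_norm nrm (v - w)"
  proof (cases "nrm (q - p) = 0")
    case False
    then have pos: "0 < nrm (q - p)" using is_norm_nonneg[OF n, of "q - p"] by linarith
    have "nrm (q - p) * nrm (q - p) \<le> \<eta> * dual_norm nrm (v - w) * nrm (q - p)"
      using sq mult_left_mono[OF cs \<eta>] by (simp add: power2_eq_square mult.assoc)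
    then show ?thesis using pos by (rule mult_right_le_imp_le)
  qed (simp add: \<eta> dual_norm_nonneg[OF n])
  then have "dual_norm nrm (v - w) * nrm (q - p) \<le> dual_norm nrm (v - w) * (\<eta> * dual_norm nrm (v - w))"
    by (rule mult_left_mono) (rule dual_norm_nonneg[OF n])
  with cs show ?thesis by (simp add: power2_eq_square mult_ac)
qed

lemma rel_smooth_abs_le:
  assumes "rel_smooth F gradF \<omega> g\<omega> L A" "x \<in> A" "z \<in> A"
  shows "\<bar>F z - F x - gradF x \<bullet> (z - x)\<bar> \<le> L * bregman \<omega> g\<omega> z x"
proof -
  have "- L * bregman \<omega> g\<omega> z x \<le> F z - F x - gradF x \<bullet> (z - x)
      \<and> F z - F x - gradF x \<bullet> (z - x) \<le> L * bregman \<omega> g\<omega> z x"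
    using assms unfolding rel_smooth_def by blast
  then show ?thesis by (simp add: abs_le_iff)
qed

(* Relative smoothness is only assumed on X \<inter> S; a point z of X is approached along the segment
   from a relative interior point c, on which the Bregman bound is convex. *)
lemma rel_smooth_bound_on_closure:
  fixes X :: "'a::euclidean_space set"
  assumes X: "convex X" "closed X" and riS: "rel_interior X \<subseteq> S"
    and cv: "convex_on C \<omega>" "X \<subseteq> C" and F: "continuous_on X F"
    and sm: "rel_smooth F gradF \<omega> g\<omega> L (X \<inter> S)" and L: "0 \<le> L"
    and x: "x \<in> X \<inter> S" and z: "z \<in> X"
  shows "\<bar>F z - F x - gradF x \<bullet> (z - x)\<bar> \<le> L * bregman \<omega> g\<omega> z x"
proof -
  obtain c where c: "c \<in> rel_interior X"
    using rel_interior_eq_empty[OF X(1)] z by blast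
  have cX: "c \<in> X" using c rel_interior_subset by auto
  let ?z = "\<lambda>e::real. z - e *\<^sub>R (z - c)"
  have ri: "?z e \<in> rel_interior X" if "0 < e" "e \<le> 1" for e
    using rel_interior_closure_convex_shrink[OF X(1) c, of z e] z that closure_subset by auto
  have "(?z \<longlongrightarrow> z - 0 *\<^sub>R (z - c)) (at_right 0)" by (intro tendsto_intros)
  then have zl: "(?z \<longlongrightarrow> z) (at_right 0)" by simp
  have evX: "eventually (\<lambda>e. ?z e \<in> X) (at_right (0::real))"
    unfolding eventually_at_right[OF zero_less_one]
    using ri rel_interior_subset[of X] by (intro exI[of _ 1]) (simp add: subset_iff)
  have "((\<lambda>e. F (?z e)) \<longlongrightarrow> F z) (at_right 0)"
    by (rule continuous_on_tendsto_compose[OF F zl z evX])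
  then have lhs: "((\<lambda>e. \<bar>F (?z e) - F x - gradF x \<bullet> (?z e - x)\<bar>) \<longlongrightarrow> \<bar>F z - F x - gradF x \<bullet> (z - x)\<bar>) (at_right 0)"
    by (intro tendsto_intros zl)
  have rhs: "((\<lambda>e. L * ((1 - e) * bregman \<omega> g\<omega> z x + e * bregman \<omega> g\<omega> c x))
      \<longlongrightarrow> L * ((1 - 0) * bregman \<omega> g\<omega> z x + 0 * bregman \<omega> g\<omega> c x)) (at_right 0)"
    by (intro tendsto_intros)
  have "eventually (\<lambda>e. \<bar>F (?z e) - F x - gradF x \<bullet> (?z e - x)\<bar>
      \<le> L * ((1 - e) * bregman \<omega> g\<omega> z x + e * bregman \<omega> g\<omega> c x)) (at_right (0::real))"
    unfolding eventually_at_right[OF zero_less_one]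
  proof (intro exI[of _ 1] conjI allI impI zero_less_one)
    fix e :: real assume e: "0 < e" "e < 1"
    have "?z e \<in> X \<inter> S" using ri[of e] e riS rel_interior_subset by auto
    then have "\<bar>F (?z e) - F x - gradF x \<bullet> (?z e - x)\<bar> \<le> L * bregman \<omega> g\<omega> (?z e) x"
      by (rule rel_smooth_abs_le[OF sm x])
    also have "bregman \<omega> g\<omega> (?z e) x \<le> (1 - e) * bregman \<omega> g\<omega> z x + e * bregman \<omega> g\<omega> c x"
      using convex_onD[OF convex_on_bregman[OF cv(1), of g\<omega> x], of e z c] e z cX cv(2)
      by (auto simp: algebra_simps)
    finally show "\<bar>F (?z e) - F x - gradF x \<bullet> (?z e - x)\<bar>
        \<le> L * ((1 - e) * bregman \<omega> g\<omega> z x + e * bregman \<omega> g\<omega> c x)"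
      using L by (simp add: mult_left_mono)
  qed
  from tendsto_le[OF trivial_limit_at_right_real rhs lhs this] show ?thesis by simp
qed

section \<open>Constant step size\<close>

lemma sqrt_step_size_identities:
  fixes lam L \<sigma> n :: real
  assumes "\<sigma> \<noteq> 0" "0 < L" "0 < n" "0 \<le> lam"
  shows "L * \<sigma>\<^sup>2 * sqrt (lam / (\<sigma>\<^sup>2 * L * n)) = sqrt (\<sigma>\<^sup>2 * L * lam / n)"
    and "sqrt (lam / (\<sigma>\<^sup>2 * L * n)) * sqrt (\<sigma>\<^sup>2 * L * lam / n) = lam / n"
proof -
  have "L * \<sigma>\<^sup>2 * sqrt (lam / (\<sigma>\<^sup>2 * L * n)) = sqrt ((L * \<sigma>\<^sup>2)\<^sup>2 * (lam / (\<sigma>\<^sup>2 * L * n)))"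
    unfolding real_sqrt_mult using assms by simp
  also have "(L * \<sigma>\<^sup>2)\<^sup>2 * (lam / (\<sigma>\<^sup>2 * L * n)) = \<sigma>\<^sup>2 * L * lam / n"
    using assms by (simp add: field_simps power2_eq_square)
  finally show "L * \<sigma>\<^sup>2 * sqrt (lam / (\<sigma>\<^sup>2 * L * n)) = sqrt (\<sigma>\<^sup>2 * L * lam / n)" .
  have "lam / (\<sigma>\<^sup>2 * L * n) * (\<sigma>\<^sup>2 * L * lam / n) = (lam / n)\<^sup>2"
    using assms by (simp add: field_simps power2_eq_square)
  then show "sqrt (lam / (\<sigma>\<^sup>2 * L * n)) * sqrt (\<sigma>\<^sup>2 * L * lam / n) = lam / n"
    using assms by (simp add: real_sqrt_mult[symmetric])
qed

lemma constant_step_rate: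
  fixes lam L \<sigma> e :: real and T :: nat
  assumes T: "1 \<le> T" and L: "0 < L" and lam: "0 \<le> lam" and e0: "0 < e"
    and e: "e = (if \<sigma> = 0 then 1 / (2 * L) else min (1 / (2 * L)) (sqrt (lam / (\<sigma>\<^sup>2 * L * real T))))"
  shows "(3 * lam + 6 * L * \<sigma>\<^sup>2 * (real T * e\<^sup>2)) / (real T * e)
    \<le> 9 * (L * lam / real T + sqrt (\<sigma>\<^sup>2 * L * lam / real T))"
proof -
  define s where "s = sqrt (lam / (\<sigma>\<^sup>2 * L * real T))"
  define Q where "Q = sqrt (\<sigma>\<^sup>2 * L * lam / real T)"
  have Tpos: "0 < real T" using T by simp
  have Q0: "0 \<le> Q" unfolding Q_def using L lam by simp
  have noise: "L * \<sigma>\<^sup>2 * e \<le> Q"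
  proof (cases "\<sigma> = 0")
    case False
    then have "e \<le> s" using e by (simp add: s_def)
    then have "L * \<sigma>\<^sup>2 * e \<le> L * \<sigma>\<^sup>2 * s" using L by (intro mult_left_mono) auto
    also have "\<dots> = Q" unfolding s_def Q_def using sqrt_step_size_identities(1) False L Tpos lam .
    finally show ?thesis .
  qed (simp add: Q0)
  have bias: "3 * lam / (real T * e) \<le> 6 * (L * lam / real T) + 3 * Q"
  proof (cases "e = 1 / (2 * L)")
    case True
    have "3 * lam / (real T * e) = 6 * (L * lam / real T)" unfolding True using L by (simp add: field_simps)
    then show ?thesis using Q0 by simp
  next
    case False
    then have "\<sigma> \<noteq> 0" "e = s" using e by (auto simp: s_def min_def split: if_splits)
    then have "s * Q = lam / real T"
      unfolding s_def Q_def using sqrt_step_size_identities(2) L Tpos lam by blast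
    then have "3 * lam / (real T * e) = 3 * Q" using \<open>e = s\<close> e0 Tpos by (simp add: field_simps)
    then show ?thesis using L lam Tpos by simp
  qed
  have "(3 * lam + 6 * L * \<sigma>\<^sup>2 * (real T * e\<^sup>2)) / (real T * e)
      = 3 * lam / (real T * e) + 6 * (L * \<sigma>\<^sup>2 * e)"
    using Tpos e0 by (simp add: field_simps power2_eq_square)
  moreover have "0 \<le> L * lam / real T" using L lam by simp
  ultimately show ?thesis using noise bias unfolding Q_def by (smt (verit))
qed

section \<open>Stochastic mirror descent\<close>

definition is_mirror_step ::
  "'a::real_inner set \<Rightarrow> ('a \<Rightarrow> real) \<Rightarrow> ('a \<Rightarrow> 'a) \<Rightarrow> ('a \<Rightarrow> real) \<Rightarrow> real
    \<Rightarrow> 'a \<Rightarrow> 'a \<Rightarrow> 'a \<Rightarrow> bool"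
  where "is_mirror_step X \<omega> g\<omega> r \<eta> v x p \<longleftrightarrow> p \<in> X \<and>
    (\<forall>z\<in>X. \<eta> * (v \<bullet> p + r p) + bregman \<omega> g\<omega> p x \<le> \<eta> * (v \<bullet> z + r z) + bregman \<omega> g\<omega> z x)"

locale stochastic_mirror_descent =
  fixes X S :: "'a::euclidean_space set" and nrm \<omega> :: "'a \<Rightarrow> real" and g\<omega> :: "'a \<Rightarrow> 'a"
    and F :: "'a \<Rightarrow> real" and gradF :: "'a \<Rightarrow> 'a" and g :: "'a \<Rightarrow> 'b \<Rightarrow> 'a" and P :: "'b measure"
    and r :: "'a \<Rightarrow> real" and L \<sigma> :: real and x0 :: 'a and \<eta> :: "nat \<Rightarrow> real"
    and xs :: "nat \<Rightarrow> (nat \<Rightarrow> 'b) \<Rightarrow> 'a"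
  assumes closed_X: "closed X" and convex_X: "convex X" and norm_nrm: "is_norm nrm"
    and DGF: "is_DGF nrm X S \<omega> g\<omega>"
    and prob_space_P: "prob_space P"
    and gradient_F: "\<And>x. GDERIV F x :> gradF x"
    and convex_r: "convex_on UNIV r"
    and bdd_below_objective: "bdd_below ((\<lambda>x. F x + r x) ` X)"
    and L_pos: "0 < L"
    and rel_smooth_F: "rel_smooth F gradF \<omega> g\<omega> L (X \<inter> S)"
    and moreau_argmin_exists: "\<And>\<rho> x. 0 < \<rho> \<Longrightarrow> x \<in> X \<inter> S \<Longrightarrow>
      \<exists>y\<in>X. \<forall>z\<in>X. F y + r y + \<rho> * bregman \<omega> g\<omega> y x \<le> F z + r z + \<rho> * bregman \<omega> g\<omega> z x"
    and fbe_argmin_exists: "\<And>\<rho> x. 0 < \<rho> \<Longrightarrow> x \<in> X \<inter> S \<Longrightarrow>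
      \<exists>y\<in>X. \<forall>z\<in>X. fbe_Q gradF r \<omega> g\<omega> \<rho> x y \<le> fbe_Q gradF r \<omega> g\<omega> \<rho> x z"
    and oracle_integrable: "\<And>x. x \<in> X \<Longrightarrow> integrable P (g x)"
    and oracle_unbiased: "\<And>x. x \<in> X \<Longrightarrow> (\<integral>\<xi>. g x \<xi> \<partial>P) = gradF x"
    and oracle_variance:
      "\<And>x. x \<in> X \<Longrightarrow> (\<integral>\<^sup>+\<xi>. ennreal ((dual_norm nrm (g x \<xi> - gradF x))\<^sup>2) \<partial>P) \<le> ennreal (\<sigma>\<^sup>2)"
    and step_pos: "\<And>t. 0 < \<eta> t" and step_antimono: "\<And>t. \<eta> (Suc t) \<le> \<eta> t"
    and step_0_le: "\<eta> 0 \<le> 1 / (2 * L)"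
    and x0_in: "x0 \<in> X \<inter> S"
    and iterate_0: "\<And>w. w \<in> space (sample_space P) \<Longrightarrow> xs 0 w = x0"
    and iterate_Suc_in_S: "\<And>w t. w \<in> space (sample_space P) \<Longrightarrow> xs (Suc t) w \<in> S"
    and iterate_Suc: "\<And>w t. w \<in> space (sample_space P) \<Longrightarrow>
      is_mirror_step X \<omega> g\<omega> r (\<eta> t) (g (xs t w) (w t)) (xs t w) (xs (Suc t) w)"

lemma SMD_instance_imp_stochastic_mirror_descent:
  assumes "SMD_instance X S nrm \<omega> g\<omega> f F gradF g P r L \<sigma> x0 \<eta> xs"
  shows "stochastic_mirror_descent X S nrm \<omega> g\<omega> F gradF g P r L \<sigma> x0 \<eta> xs"
  using assms unfolding SMD_instance_def stochastic_mirror_descent_def is_mirror_step_def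
  by (elim conjE) (intro conjI; blast)

context stochastic_mirror_descent
begin

definition \<Phi> :: "'a \<Rightarrow> real" where "\<Phi> x = F x + r x"

definition \<Phi>_min :: real where "\<Phi>_min = Inf (\<Phi> ` X)"

definition moreau :: "'a \<Rightarrow> real" where "moreau = bregman_moreau \<Phi> \<omega> g\<omega> X (2 * L)"

definition fbe :: "'a \<Rightarrow> real" where "fbe = bregman_fbe gradF r \<omega> g\<omega> X (3 * L)"

definition is_moreau_point :: "'a \<Rightarrow> 'a \<Rightarrow> bool" where
  "is_moreau_point x y \<longleftrightarrow> y \<in> X \<and>
    (\<forall>z\<in>X. \<Phi> y + 2 * L * bregman \<omega> g\<omega> y x \<le> \<Phi> z + 2 * L * bregman \<omega> g\<omega> z x)"

lemma X_subset_closure_S: "X \<subseteq> closure S"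
proof -
  have "X = closure (rel_interior X)"
    using convex_closure_rel_interior[OF convex_X] closed_X by (simp add: closure_closed)
  also have "\<dots> \<subseteq> closure S" using DGF by (intro closure_mono) (simp add: is_DGF_def)
  finally show ?thesis .
qed

lemma strongly_convex_\<omega>: "strongly_convex_wrt nrm 1 (closure S) \<omega>"
  using DGF by (simp add: is_DGF_def)

lemma gradient_\<omega>: "x \<in> S \<Longrightarrow> GDERIV \<omega> x :> g\<omega> x"
  using DGF by (simp add: is_DGF_def)

lemma convex_on_\<omega>: "convex_on (closure S) \<omega>"
  by (rule strongly_convex_wrt_imp_convex_on[OF strongly_convex_\<omega>]) simp

lemma bregman_nonneg_on_X:
  assumes "x \<in> X \<inter> S" "z \<in> X"
  shows "0 \<le> bregman \<omega> g\<omega> z x"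
  by (rule bregman_nonneg[OF convex_on_\<omega> _ _ gradient_\<omega>]) (use assms X_subset_closure_S closure_subset in auto)

lemma rel_smooth_bound:
  assumes "x \<in> X \<inter> S" "z \<in> X"
  shows "\<bar>F z - F x - gradF x \<bullet> (z - x)\<bar> \<le> L * bregman \<omega> g\<omega> z x"
proof (rule rel_smooth_bound_on_closure[OF convex_X closed_X _ convex_on_\<omega> X_subset_closure_S _
      rel_smooth_F _ assms])
  show "rel_interior X \<subseteq> S" using DGF by (simp add: is_DGF_def)
  show "continuous_on X F"
    using gradient_F unfolding gderiv_def by (meson continuous_at_imp_continuous_on has_derivative_continuous)
qed (use L_pos in simp)

lemma \<Phi>_min_le: "y \<in> X \<Longrightarrow> \<Phi>_min \<le> \<Phi> y"
  unfolding \<Phi>_min_def using bdd_below_objective by (intro cInf_lower) (auto simp: \<Phi>_def[abs_def])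

lemma step_le_step_0: "\<eta> t \<le> \<eta> 0"
  by (induction t) (use step_antimono order_trans in blast)+

lemma step_le: "\<eta> t \<le> 1 / (2 * L)"
  using step_le_step_0 step_0_le by (rule order_trans)

lemma mirror_objective_strongly_convex:
  assumes "0 \<le> e"
  shows "strongly_convex_wrt nrm 1 X (\<lambda>z. bregman \<omega> g\<omega> z x + e * r z)"
proof (rule strongly_convex_wrt_add_convex)
  show "strongly_convex_wrt nrm 1 X (\<lambda>z. bregman \<omega> g\<omega> z x)"
    by (rule strongly_convex_wrt_subset[OF strongly_convex_wrt_bregman[OF strongly_convex_\<omega>]
          X_subset_closure_S convex_X])
  show "convex_on X (\<lambda>z. e * r z)"
    by (intro convex_on_cmul assms convex_on_subset[OF convex_r] convex_X) simp
qed

lemma mirror_step_three_point: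
  assumes e: "0 \<le> e" and p: "is_mirror_step X \<omega> g\<omega> r e v x p" "p \<in> S" and z: "z \<in> X"
  shows "e * (v \<bullet> p + r p) + bregman \<omega> g\<omega> p x + bregman \<omega> g\<omega> z p \<le> e * (v \<bullet> z + r z) + bregman \<omega> g\<omega> z x"
proof (rule bregman_three_point[where \<psi>="\<lambda>z. e * (v \<bullet> z + r z)" and \<omega>=\<omega> and g\<omega>=g\<omega> and m=p,
      OF convex_X _ _ gradient_\<omega>[OF p(2)] _ z])
  show "convex_on X (\<lambda>z. e * (v \<bullet> z + r z))"
    by (intro convex_on_cmul e convex_on_add convex_on_inner convex_X convex_on_subset[OF convex_r]) simp
qed (use p(1) in \<open>auto simp: is_mirror_step_def\<close>)

lemma mirror_step_stability:
  assumes e: "0 \<le> e" and "is_mirror_step X \<omega> g\<omega> r e v x p" "is_mirror_step X \<omega> g\<omega> r e w x q"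
  shows "(v - w) \<bullet> (q - p) \<le> e * (dual_norm nrm (v - w))\<^sup>2"
  using assms(2,3)
  by (intro strongly_convex_wrt_argmin_stability[OF norm_nrm mirror_objective_strongly_convex[OF e] e])
     (auto simp: is_mirror_step_def algebra_simps)

lemma mirror_step_unique:
  assumes e: "0 \<le> e" and "is_mirror_step X \<omega> g\<omega> r e v x p" "is_mirror_step X \<omega> g\<omega> r e v x q"
  shows "p = q"
  using assms(2,3)
  by (intro strongly_convex_wrt_argmin_unique[OF norm_nrm
        strongly_convex_wrt_add_convex[OF mirror_objective_strongly_convex[OF e]
          convex_on_cmul[OF e convex_on_inner[OF convex_X]]]])
     (auto simp: is_mirror_step_def algebra_simps)

lemma moreau_point_exists: "x \<in> X \<inter> S \<Longrightarrow> \<exists>y. is_moreau_point x y"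
  using moreau_argmin_exists[of "2 * L" x] L_pos by (auto simp: is_moreau_point_def \<Phi>_def)

lemma moreau_eq: "is_moreau_point x y \<Longrightarrow> moreau x = \<Phi> y + 2 * L * bregman \<omega> g\<omega> y x"
  unfolding moreau_def bregman_moreau_def is_moreau_point_def by (rule cInf_eq_minimum) auto

lemma moreau_le: "x \<in> X \<inter> S \<Longrightarrow> z \<in> X \<Longrightarrow> moreau x \<le> \<Phi> z + 2 * L * bregman \<omega> g\<omega> z x"
  using moreau_point_exists moreau_eq by (fastforce simp: is_moreau_point_def)

lemma \<Phi>_min_le_moreau:
  assumes x: "x \<in> X \<inter> S"
  shows "\<Phi>_min \<le> moreau x"
proof -
  obtain y where y: "is_moreau_point x y" using moreau_point_exists[OF x] by blast
  then have "y \<in> X" by (simp add: is_moreau_point_def)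
  then have "\<Phi>_min \<le> \<Phi> y" "0 \<le> 2 * L * bregman \<omega> g\<omega> y x"
    using \<Phi>_min_le bregman_nonneg_on_X[OF x] L_pos by auto
  then show ?thesis using moreau_eq[OF y] by linarith
qed

lemma exact_mirror_step_exists:
  assumes x: "x \<in> X \<inter> S" and e: "0 < e"
  shows "\<exists>p. is_mirror_step X \<omega> g\<omega> r e (gradF x) x p"
proof -
  obtain p where p: "p \<in> X" "\<And>z. z \<in> X \<Longrightarrow> fbe_Q gradF r \<omega> g\<omega> (1 / e) x p \<le> fbe_Q gradF r \<omega> g\<omega> (1 / e) x z"
    using fbe_argmin_exists[of "1 / e" x] x e by auto
  have "e * fbe_Q gradF r \<omega> g\<omega> (1 / e) x z
      = e * (gradF x \<bullet> z + r z) + bregman \<omega> g\<omega> z x - e * (gradF x \<bullet> x + r x)" for z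
    using e by (simp add: fbe_Q_def algebra_simps inner_diff_right)
  then have "is_mirror_step X \<omega> g\<omega> r e (gradF x) x p"
    using p e unfolding is_mirror_step_def by (smt (verit) mult_left_mono)
  then show ?thesis ..
qed

lemma fbe_bounds:
  assumes x: "x \<in> X \<inter> S"
  shows fbe_nonneg: "0 \<le> fbe x" and fbe_le_moreau_gap: "fbe x \<le> 6 * L * (\<Phi> x - moreau x)"
proof -
  obtain y where y: "y \<in> X" "\<And>z. z \<in> X \<Longrightarrow> fbe_Q gradF r \<omega> g\<omega> (3 * L) x y \<le> fbe_Q gradF r \<omega> g\<omega> (3 * L) x z"
    using fbe_argmin_exists[of "3 * L" x] L_pos x by auto
  have fbe: "fbe x = - 6 * L * fbe_Q gradF r \<omega> g\<omega> (3 * L) x y"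
    unfolding fbe_def bregman_fbe_def
    by (subst cInf_eq_minimum[of "fbe_Q gradF r \<omega> g\<omega> (3 * L) x y"]) (use y in auto)
  have "fbe_Q gradF r \<omega> g\<omega> (3 * L) x y \<le> 0"
    using y(2)[of x] x by (simp add: fbe_Q_def)
  then show "0 \<le> fbe x" using fbe L_pos by (simp add: mult_le_0_iff)
  have "moreau x - \<Phi> x \<le> \<Phi> y + 2 * L * bregman \<omega> g\<omega> y x - \<Phi> x"
    using moreau_le[OF x y(1)] by simp
  also have "\<dots> \<le> fbe_Q gradF r \<omega> g\<omega> (3 * L) x y"
    using rel_smooth_bound[OF x y(1)] unfolding fbe_Q_def \<Phi>_def abs_le_iff by linarith
  finally have "6 * L * (moreau x - \<Phi> x) \<le> 6 * L * fbe_Q gradF r \<omega> g\<omega> (3 * L) x y"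
    using L_pos by (intro mult_left_mono) auto
  then show "fbe x \<le> 6 * L * (\<Phi> x - moreau x)" using fbe by (simp add: algebra_simps)
qed

lemma mirror_step_moreau_point_bound:
  assumes x: "x \<in> X \<inter> S" and e: "0 < e"
    and p: "is_mirror_step X \<omega> g\<omega> r e v x p" "p \<in> S"
    and y: "y \<in> X" and q: "is_mirror_step X \<omega> g\<omega> r e (gradF x) x q"
  shows "bregman \<omega> g\<omega> y p \<le> bregman \<omega> g\<omega> y x - bregman \<omega> g\<omega> p x
    + e * (\<Phi> y - \<Phi> p + L * bregman \<omega> g\<omega> y x + L * bregman \<omega> g\<omega> p x
           + (v - gradF x) \<bullet> (y - q) + e * (dual_norm nrm (v - gradF x))\<^sup>2)"
    (is "_ \<le> _ + e * ?B")
proof -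
  have pX: "p \<in> X" using p by (simp add: is_mirror_step_def)
  have "gradF x \<bullet> (y - x) \<le> F y - F x + L * bregman \<omega> g\<omega> y x"
    "- (gradF x \<bullet> (p - x)) \<le> F x - F p + L * bregman \<omega> g\<omega> p x"
    using rel_smooth_bound[OF x y] rel_smooth_bound[OF x pX] by (auto simp: abs_le_iff)
  moreover have "(v - gradF x) \<bullet> (q - p) \<le> e * (dual_norm nrm (v - gradF x))\<^sup>2"
    using mirror_step_stability[OF _ p(1) q] e by simp
  ultimately have "v \<bullet> (y - p) + r y - r p \<le> ?B"
    unfolding \<Phi>_def by (simp add: inner_diff_left inner_diff_right)
  then have "e * (v \<bullet> (y - p) + r y - r p) \<le> e * ?B" using e by (intro mult_left_mono) auto
  then show ?thesis
    using mirror_step_three_point[OF _ p y] e by (simp add: algebra_simps inner_diff_right)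
qed

lemma mirror_step_descent:
  assumes x: "x \<in> X \<inter> S" and e: "0 < e" "e \<le> 1 / (2 * L)"
    and p: "is_mirror_step X \<omega> g\<omega> r e v x p" "p \<in> S"
    and y: "is_moreau_point x y" and q: "is_mirror_step X \<omega> g\<omega> r e (gradF x) x q"
  shows "moreau p + 2 * L * e * \<Phi> p + e / 3 * fbe x
    \<le> moreau x + 2 * L * e * \<Phi> x + 2 * L * e * ((v - gradF x) \<bullet> (y - q))
       + 2 * L * e\<^sup>2 * (dual_norm nrm (v - gradF x))\<^sup>2"
proof -
  let ?D = "bregman \<omega> g\<omega>"
  define N where "N = (v - gradF x) \<bullet> (y - q)"
  define V where "V = (dual_norm nrm (v - gradF x))\<^sup>2"
  have yX: "y \<in> X" and pX: "p \<in> X" using y p by (auto simp: is_moreau_point_def is_mirror_step_def)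
  have D0: "0 \<le> ?D y x" "0 \<le> ?D p x" using bregman_nonneg_on_X[OF x] yX pX by auto
  have "moreau p + 2 * L * e * \<Phi> p \<le> \<Phi> y + 2 * L * ?D y p + 2 * L * e * \<Phi> p"
    using moreau_le[OF _ yX] p pX by simp
  also have "\<dots> \<le> \<Phi> y + 2 * L * (?D y x - ?D p x
      + e * (\<Phi> y - \<Phi> p + L * ?D y x + L * ?D p x + N + e * V)) + 2 * L * e * \<Phi> p"
    using mirror_step_moreau_point_bound[OF x e(1) p yX q] L_pos unfolding N_def V_def by simp
  also have "\<dots> = moreau x - 2 * L * ?D p x + 2 * L * e * (\<Phi> y + L * ?D y x)
      + 2 * L * (e * L * ?D p x) + 2 * L * e * N + 2 * L * e\<^sup>2 * V"
    unfolding moreau_eq[OF y] by (simp add: algebra_simps power2_eq_square)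
  also have "\<dots> \<le> moreau x + 2 * L * e * moreau x + 2 * L * e * N + 2 * L * e\<^sup>2 * V"
  proof -
    have "\<Phi> y + L * ?D y x \<le> moreau x" using moreau_eq[OF y] D0 L_pos by simp
    then have "2 * L * e * (\<Phi> y + L * ?D y x) \<le> 2 * L * e * moreau x"
      using L_pos e by (intro mult_left_mono) auto
    moreover have "e * L \<le> 1 / 2" using e L_pos by (simp add: field_simps)
    then have "2 * L * (e * L * ?D p x) \<le> 2 * L * ?D p x"
      using D0 L_pos e by (intro mult_left_mono mult_left_le_one_le) auto
    ultimately show ?thesis by linarith
  qed
  also have "\<dots> \<le> moreau x + 2 * L * e * \<Phi> x - e / 3 * fbe x + 2 * L * e * N + 2 * L * e\<^sup>2 * V"
  proof -
    have "e / 3 * fbe x \<le> e / 3 * (6 * L * (\<Phi> x - moreau x))"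
      using fbe_le_moreau_gap[OF x] e by (intro mult_left_mono) auto
    then show ?thesis by (simp add: algebra_simps)
  qed
  finally show ?thesis unfolding N_def V_def by simp
qed

abbreviation \<Omega> :: "(nat \<Rightarrow> 'b) measure" where "\<Omega> \<equiv> sample_space P"

lemma oracle_noise_mean_zero:
  assumes "x \<in> X"
  shows "integrable P (\<lambda>\<xi>. (g x \<xi> - gradF x) \<bullet> u)" "(\<integral>\<xi>. (g x \<xi> - gradF x) \<bullet> u \<partial>P) = 0"
proof -
  interpret P: prob_space P by (rule prob_space_P)
  have "integrable P (\<lambda>\<xi>. g x \<xi> \<bullet> u)" using oracle_integrable[OF assms] by simp
  then show "integrable P (\<lambda>\<xi>. (g x \<xi> - gradF x) \<bullet> u)" by (simp add: inner_diff_left)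
  have "(\<integral>\<xi>. g x \<xi> \<bullet> u \<partial>P) = gradF x \<bullet> u"
    using integral_inner_left[of u P "g x"] oracle_integrable[OF assms] oracle_unbiased[OF assms] by simp
  with \<open>integrable P (\<lambda>\<xi>. g x \<xi> \<bullet> u)\<close> show "(\<integral>\<xi>. (g x \<xi> - gradF x) \<bullet> u \<partial>P) = 0"
    by (simp add: inner_diff_left P.prob_space)
qed

lemma oracle_variance_integral:
  assumes "x \<in> X"
  shows "integrable P (\<lambda>\<xi>. (dual_norm nrm (g x \<xi> - gradF x))\<^sup>2)"
    "(\<integral>\<xi>. (dual_norm nrm (g x \<xi> - gradF x))\<^sup>2 \<partial>P) \<le> \<sigma>\<^sup>2"
proof -
  have "g x \<in> borel_measurable P" using oracle_integrable[OF assms] by auto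
  then have "(\<lambda>\<xi>. (dual_norm nrm (g x \<xi> - gradF x))\<^sup>2) \<in> borel_measurable P"
    by (intro borel_measurable_power borel_measurable_continuous_on[OF continuous_on_dual_norm[OF norm_nrm]])
      simp
  moreover have "(\<integral>\<^sup>+\<xi>. ennreal ((dual_norm nrm (g x \<xi> - gradF x))\<^sup>2) \<partial>P) < \<infinity>"
    using oracle_variance[OF assms] by (simp add: le_less_trans)
  ultimately show int: "integrable P (\<lambda>\<xi>. (dual_norm nrm (g x \<xi> - gradF x))\<^sup>2)"
    by (intro integrableI_nonneg) auto
  have "ennreal (\<integral>\<xi>. (dual_norm nrm (g x \<xi> - gradF x))\<^sup>2 \<partial>P) \<le> ennreal (\<sigma>\<^sup>2)"
    using oracle_variance[OF assms] nn_integral_eq_integral[OF int] by simp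
  then show "(\<integral>\<xi>. (dual_norm nrm (g x \<xi> - gradF x))\<^sup>2 \<partial>P) \<le> \<sigma>\<^sup>2"
    by (simp add: ennreal_le_iff)
qed

lemma iterate_in: "w \<in> space \<Omega> \<Longrightarrow> xs t w \<in> X \<inter> S"
  using x0_in iterate_0 iterate_Suc_in_S iterate_Suc by (cases t) (auto simp: is_mirror_step_def)

(* Mirror steps are unique, so xs s w depends on the samples w 0, ..., w (s - 1) only. *)
lemma iterate_fun_upd:
  assumes w: "w \<in> space \<Omega>" and \<xi>: "\<xi> \<in> space P"
  shows "s \<le> t \<Longrightarrow> xs s (w(t := \<xi>)) = xs s w"
proof (induction s)
  case 0
  show ?case by (simp only: iterate_0[OF w] iterate_0[OF fun_upd_in_space_PiM[OF w \<xi>, of t]])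
next
  case (Suc s)
  have "xs s (w(t := \<xi>)) = xs s w" using Suc by (simp add: fun_upd_def)
  moreover have "(w(t := \<xi>)) s = w s" using Suc.prems by simp
  ultimately show ?case
    using iterate_Suc[OF w, of s] iterate_Suc[OF fun_upd_in_space_PiM[OF w \<xi>, of t], of s]
    by (intro mirror_step_unique[OF less_imp_le[OF step_pos]]) (auto simp: fun_upd_def)
qed

definition lyapunov :: "nat \<Rightarrow> (nat \<Rightarrow> 'b) \<Rightarrow> real" where
  "lyapunov t w = moreau (xs t w) - \<Phi>_min + 2 * L * \<eta> t * (\<Phi> (xs t w) - \<Phi>_min)
     + (\<Sum>s<t. \<eta> s / 3 * fbe (xs s w))"

lemma weighted_fbe_le_lyapunov:
  assumes w: "w \<in> space \<Omega>"
  shows "(\<Sum>s<t. \<eta> s / 3 * fbe (xs s w)) \<le> lyapunov t w"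
proof -
  have "\<Phi>_min \<le> moreau (xs t w)" "\<Phi>_min \<le> \<Phi> (xs t w)"
    using \<Phi>_min_le_moreau \<Phi>_min_le iterate_in[OF w] by auto
  moreover have "0 \<le> 2 * L * \<eta> t" using L_pos step_pos[of t] by simp
  ultimately show ?thesis unfolding lyapunov_def by simp
qed

lemma lyapunov_nonneg: "w \<in> space \<Omega> \<Longrightarrow> 0 \<le> lyapunov t w"
  using weighted_fbe_le_lyapunov[of w t] fbe_nonneg[OF iterate_in] step_pos
  by (smt (verit) divide_nonneg_pos mult_nonneg_nonneg sum_nonneg)

lemma lyapunov_Suc_le:
  assumes w: "w \<in> space \<Omega>" and \<xi>: "\<xi> \<in> space P"
    and y: "is_moreau_point (xs t w) y" and q: "is_mirror_step X \<omega> g\<omega> r (\<eta> t) (gradF (xs t w)) (xs t w) q"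
  shows "lyapunov (Suc t) (w(t := \<xi>)) \<le> lyapunov t w
    + 2 * L * \<eta> t * ((g (xs t w) \<xi> - gradF (xs t w)) \<bullet> (y - q))
    + 2 * L * (\<eta> t)\<^sup>2 * (dual_norm nrm (g (xs t w) \<xi> - gradF (xs t w)))\<^sup>2"
proof -
  let ?w = "w(t := \<xi>)"
  define x where "x = xs t w"
  define p where "p = xs (Suc t) ?w"
  have w': "?w \<in> space \<Omega>" by (rule fun_upd_in_space_PiM[OF w \<xi>])
  have past: "xs s ?w = xs s w" if "s \<le> t" for s using iterate_fun_upd[OF w \<xi> that] .
  have x: "x \<in> X \<inter> S" unfolding x_def by (rule iterate_in[OF w])
  have p: "is_mirror_step X \<omega> g\<omega> r (\<eta> t) (g x \<xi>) x p" "p \<in> S"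
    using iterate_Suc[OF w', of t] iterate_Suc_in_S[OF w', of t] past[of t] by (simp_all add: x_def p_def)
  then have "\<Phi>_min \<le> \<Phi> p" by (intro \<Phi>_min_le) (simp add: is_mirror_step_def)
  then have "2 * L * \<eta> (Suc t) * (\<Phi> p - \<Phi>_min) \<le> 2 * L * \<eta> t * (\<Phi> p - \<Phi>_min)"
    using L_pos step_antimono[of t] by (intro mult_right_mono) auto
  moreover have "(\<Sum>s<Suc t. \<eta> s / 3 * fbe (xs s ?w)) = (\<Sum>s<t. \<eta> s / 3 * fbe (xs s w)) + \<eta> t / 3 * fbe x"
    using past by (simp add: x_def)
  moreover have "moreau p + 2 * L * \<eta> t * \<Phi> p + \<eta> t / 3 * fbe x
    \<le> moreau x + 2 * L * \<eta> t * \<Phi> x + 2 * L * \<eta> t * ((g x \<xi> - gradF x) \<bullet> (y - q))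
       + 2 * L * (\<eta> t)\<^sup>2 * (dual_norm nrm (g x \<xi> - gradF x))\<^sup>2"
    using mirror_step_descent[OF x step_pos step_le p] y q by (simp add: x_def)
  ultimately show ?thesis
    unfolding lyapunov_def p_def[symmetric] x_def[symmetric] by (simp add: algebra_simps)
qed

lemma lyapunov_expected_step:
  assumes w: "w \<in> space \<Omega>" and c: "0 \<le> c"
  shows "(\<integral>\<^sup>+\<xi>. ennreal (lyapunov (Suc t) (w(t := \<xi>)) + c) \<partial>P)
    \<le> ennreal (lyapunov t w + c + 2 * L * (\<eta> t)\<^sup>2 * \<sigma>\<^sup>2)"
proof -
  interpret P: prob_space P by (rule prob_space_P)
  define x where "x = xs t w"
  have x: "x \<in> X \<inter> S" unfolding x_def by (rule iterate_in[OF w])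
  obtain y where y: "is_moreau_point x y" using moreau_point_exists[OF x] by blast
  obtain q where q: "is_mirror_step X \<omega> g\<omega> r (\<eta> t) (gradF x) x q"
    using exact_mirror_step_exists[OF x step_pos] by blast
  show ?thesis
  proof (rule P.nn_integral_le_of_mean_zero_bound)
    show "integrable P (\<lambda>\<xi>. 2 * L * \<eta> t * ((g x \<xi> - gradF x) \<bullet> (y - q)))"
      "(\<integral>\<xi>. 2 * L * \<eta> t * ((g x \<xi> - gradF x) \<bullet> (y - q)) \<partial>P) = 0"
      using oracle_noise_mean_zero[of x "y - q"] x by simp_all
    show "integrable P (\<lambda>\<xi>. (dual_norm nrm (g x \<xi> - gradF x))\<^sup>2)"
      "(\<integral>\<xi>. (dual_norm nrm (g x \<xi> - gradF x))\<^sup>2 \<partial>P) \<le> \<sigma>\<^sup>2"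
      using oracle_variance_integral[of x] x by simp_all
    show "0 \<le> 2 * L * (\<eta> t)\<^sup>2" using L_pos by simp
    fix \<xi> assume \<xi>: "\<xi> \<in> space P"
    show "0 \<le> lyapunov (Suc t) (w(t := \<xi>)) + c"
      using lyapunov_nonneg[OF fun_upd_in_space_PiM[OF w \<xi>]] c by simp
    show "lyapunov (Suc t) (w(t := \<xi>)) + c \<le> lyapunov t w + c
      + 2 * L * \<eta> t * ((g x \<xi> - gradF x) \<bullet> (y - q)) + 2 * L * (\<eta> t)\<^sup>2 * (dual_norm nrm (g x \<xi> - gradF x))\<^sup>2"
      using lyapunov_Suc_le[OF w \<xi> y[unfolded x_def] q[unfolded x_def]] by (simp add: x_def)
  qed
qed

lemma expected_lyapunov_le:
  "0 \<le> c \<Longrightarrow> (\<integral>\<^sup>+w. ennreal (lyapunov T w + c) \<partial>\<Omega>)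
    \<le> ennreal (moreau x0 - \<Phi>_min + 2 * L * \<eta> 0 * (\<Phi> x0 - \<Phi>_min) + (\<Sum>t<T. 2 * L * (\<eta> t)\<^sup>2 * \<sigma>\<^sup>2) + c)"
proof (induction T arbitrary: c)
  case 0
  interpret \<Omega>: prob_space \<Omega> using prob_space_P by (intro prob_space_PiM) auto
  have "(\<integral>\<^sup>+w. ennreal (lyapunov 0 w + c) \<partial>\<Omega>)
      = (\<integral>\<^sup>+w. ennreal (moreau x0 - \<Phi>_min + 2 * L * \<eta> 0 * (\<Phi> x0 - \<Phi>_min) + c) \<partial>\<Omega>)"
    by (intro nn_integral_cong) (simp add: lyapunov_def iterate_0)
  then show ?case by (simp add: \<Omega>.emeasure_space_1)
next
  case (Suc T)
  let ?d = "2 * L * (\<eta> T)\<^sup>2 * \<sigma>\<^sup>2"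
  have "(\<integral>\<^sup>+w. ennreal (lyapunov (Suc T) w + c) \<partial>\<Omega>)
      \<le> (\<integral>\<^sup>+w. (\<integral>\<^sup>+\<xi>. ennreal (lyapunov (Suc T) (w(T := \<xi>)) + c) \<partial>P) \<partial>\<Omega>)"
    by (rule nn_integral_PiM_fun_upd_le[OF prob_space_P])
  also have "\<dots> \<le> (\<integral>\<^sup>+w. ennreal (lyapunov T w + (c + ?d)) \<partial>\<Omega>)"
    using lyapunov_expected_step[OF _ Suc.prems] by (intro nn_integral_mono) (simp add: add.assoc)
  also have "\<dots> \<le> ennreal (moreau x0 - \<Phi>_min + 2 * L * \<eta> 0 * (\<Phi> x0 - \<Phi>_min)
      + (\<Sum>t<T. 2 * L * (\<eta> t)\<^sup>2 * \<sigma>\<^sup>2) + (c + ?d))"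
    using Suc L_pos by simp
  finally show ?case by (simp add: ac_simps)
qed

lemma lambda0_eq: "lambda0 X \<omega> g\<omega> F r L x0 = moreau x0 - \<Phi>_min + \<Phi> x0 - \<Phi>_min"
proof -
  have "(\<lambda>x. F x + r x) = \<Phi>" by (simp add: \<Phi>_def fun_eq_iff)
  then show ?thesis by (simp add: lambda0_def Let_def moreau_def \<Phi>_min_def)
qed

lemma initial_lyapunov_le_lambda0:
  "moreau x0 - \<Phi>_min + 2 * L * \<eta> 0 * (\<Phi> x0 - \<Phi>_min) \<le> lambda0 X \<omega> g\<omega> F r L x0"
  and lambda0_nonneg: "0 \<le> lambda0 X \<omega> g\<omega> F r L x0"
proof -
  have gap: "0 \<le> \<Phi> x0 - \<Phi>_min" "\<Phi>_min \<le> moreau x0" using \<Phi>_min_le \<Phi>_min_le_moreau x0_in by auto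
  moreover have "2 * L * \<eta> 0 \<le> 1" using step_0_le L_pos by (simp add: field_simps)
  ultimately have "2 * L * \<eta> 0 * (\<Phi> x0 - \<Phi>_min) \<le> \<Phi> x0 - \<Phi>_min"
    using L_pos step_pos[of 0] by (intro mult_left_le_one_le) auto
  then show "moreau x0 - \<Phi>_min + 2 * L * \<eta> 0 * (\<Phi> x0 - \<Phi>_min) \<le> lambda0 X \<omega> g\<omega> F r L x0"
    unfolding lambda0_eq by simp
  show "0 \<le> lambda0 X \<omega> g\<omega> F r L x0" unfolding lambda0_eq using gap by simp
qed

lemma weighted_fbe_sum_le_lyapunov:
  assumes w: "w \<in> space \<Omega>" and E: "0 < E"
  shows "(\<Sum>t<T. ennreal (\<eta> t / E) * ennreal (fbe (xs t w))) \<le> ennreal (3 / E) * ennreal (lyapunov T w)"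
proof -
  have "(\<Sum>t<T. ennreal (\<eta> t / E) * ennreal (fbe (xs t w))) = ennreal (\<Sum>t<T. \<eta> t / E * fbe (xs t w))"
    using step_pos E fbe_nonneg[OF iterate_in[OF w]]
    by (simp add: ennreal_mult[symmetric] sum_ennreal less_imp_le)
  also have "\<dots> \<le> ennreal (3 / E * lyapunov T w)"
  proof (rule ennreal_leI)
    have "(\<Sum>t<T. \<eta> t / E * fbe (xs t w)) = 3 / E * (\<Sum>t<T. \<eta> t / 3 * fbe (xs t w))"
      by (simp add: sum_distrib_left)
    also have "\<dots> \<le> 3 / E * lyapunov T w"
      using weighted_fbe_le_lyapunov[OF w] E by (intro mult_left_mono) auto
    finally show "(\<Sum>t<T. \<eta> t / E * fbe (xs t w)) \<le> 3 / E * lyapunov T w" .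
  qed
  also have "\<dots> = ennreal (3 / E) * ennreal (lyapunov T w)"
    using E lyapunov_nonneg[OF w, of T] by (simp add: ennreal_mult[symmetric])
  finally show ?thesis .
qed

lemma expected_lyapunov_le_lambda0:
  "(\<integral>\<^sup>+w. ennreal (lyapunov T w) \<partial>\<Omega>)
    \<le> ennreal (lambda0 X \<omega> g\<omega> F r L x0 + 2 * L * \<sigma>\<^sup>2 * (\<Sum>t<T. (\<eta> t)\<^sup>2))"
proof -
  have "(\<Sum>t<T. 2 * L * (\<eta> t)\<^sup>2 * \<sigma>\<^sup>2) = 2 * L * \<sigma>\<^sup>2 * (\<Sum>t<T. (\<eta> t)\<^sup>2)"
    by (simp add: sum_distrib_left mult_ac)
  then show ?thesis
    using expected_lyapunov_le[of 0 T] initial_lyapunov_le_lambda0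
    by (auto elim!: order_trans intro!: ennreal_leI)
qed

lemma exp_fbe_output_le:
  assumes T: "1 \<le> T"
  shows "exp_fbe_output X \<omega> g\<omega> gradF r P L \<eta> xs T
    \<le> ennreal ((3 * lambda0 X \<omega> g\<omega> F r L x0 + 6 * L * \<sigma>\<^sup>2 * (\<Sum>t<T. (\<eta> t)\<^sup>2)) / (\<Sum>t<T. \<eta> t))"
proof -
  define E where "E = (\<Sum>t<T. \<eta> t)"
  have "\<eta> 0 \<le> E" unfolding E_def using T step_pos by (intro member_le_sum) (auto intro: less_imp_le)
  then have E: "0 < E" using step_pos[of 0] by linarith
  have "exp_fbe_output X \<omega> g\<omega> gradF r P L \<eta> xs T
      = (\<Sum>t<T. \<integral>\<^sup>+w. ennreal (\<eta> t / E) * ennreal (fbe (xs t w)) \<partial>\<Omega>)"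
    by (simp add: exp_fbe_output_def fbe_def E_def nn_integral_cmult_nonmeasurable)
  also have "\<dots> \<le> (\<integral>\<^sup>+w. (\<Sum>t<T. ennreal (\<eta> t / E) * ennreal (fbe (xs t w))) \<partial>\<Omega>)"
    by (rule nn_integral_sum_superadditive)
  also have "\<dots> \<le> (\<integral>\<^sup>+w. ennreal (3 / E) * ennreal (lyapunov T w) \<partial>\<Omega>)"
    using weighted_fbe_sum_le_lyapunov[OF _ E] by (intro nn_integral_mono)
  also have "\<dots> = ennreal (3 / E) * (\<integral>\<^sup>+w. ennreal (lyapunov T w) \<partial>\<Omega>)"
    by (simp add: nn_integral_cmult_nonmeasurable)
  also have "\<dots> \<le> ennreal (3 / E) * ennreal (lambda0 X \<omega> g\<omega> F r L x0 + 2 * L * \<sigma>\<^sup>2 * (\<Sum>t<T. (\<eta> t)\<^sup>2))"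
    by (rule mult_left_mono[OF expected_lyapunov_le_lambda0]) simp
  also have "\<dots> = ennreal ((3 * lambda0 X \<omega> g\<omega> F r L x0 + 6 * L * \<sigma>\<^sup>2 * (\<Sum>t<T. (\<eta> t)\<^sup>2)) / E)"
  proof -
    have "0 \<le> lambda0 X \<omega> g\<omega> F r L x0 + 2 * L * \<sigma>\<^sup>2 * (\<Sum>t<T. (\<eta> t)\<^sup>2)"
      using lambda0_nonneg L_pos by (simp add: sum_nonneg)
    then show ?thesis using E by (simp add: ennreal_mult[symmetric] field_simps)
  qed
  finally show ?thesis unfolding E_def .
qed

lemma exp_fbe_output_constant_step_le:
  assumes T: "1 \<le> T" and step: "\<forall>t. \<eta> t = (if \<sigma> = 0 then 1 / (2 * L)
      else min (1 / (2 * L)) (sqrt (lambda0 X \<omega> g\<omega> F r L x0 / (\<sigma>\<^sup>2 * L * real T))))"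
  shows "exp_fbe_output X \<omega> g\<omega> gradF r P L \<eta> xs T
    \<le> ennreal (9 * (L * lambda0 X \<omega> g\<omega> F r L x0 / real T
                    + sqrt (\<sigma>\<^sup>2 * L * lambda0 X \<omega> g\<omega> F r L x0 / real T)))"
proof -
  have "(\<Sum>t<T. \<eta> t) = real T * \<eta> 0" "(\<Sum>t<T. (\<eta> t)\<^sup>2) = real T * (\<eta> 0)\<^sup>2"
    using step by simp_all
  then show ?thesis
    using exp_fbe_output_le[OF T]
      constant_step_rate[OF T L_pos lambda0_nonneg step_pos spec[OF step, of 0]]
    by (auto elim!: order_trans intro!: ennreal_leI)
qed

end

theorem theorem1:
  shows
  "(\<forall>(X::'a::euclidean_space set) S nrm \<omega> g\<omega> f F gradF g (P::'b measure) r L \<sigma> x0 \<eta> xs (T::nat).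
      SMD_instance X S nrm \<omega> g\<omega> f F gradF g P r L \<sigma> x0 \<eta> xs \<and> 1 \<le> T \<longrightarrow>
      exp_fbe_output X \<omega> g\<omega> gradF r P L \<eta> xs T
        \<le> ennreal ((3 * lambda0 X \<omega> g\<omega> F r L x0 + 6 * L * \<sigma>\<^sup>2 * (\<Sum>t<T. (\<eta> t)\<^sup>2))
                   / (\<Sum>t<T. \<eta> t)))
   \<and> (\<exists>C::real. C > 0 \<and>
      (\<forall>(X::'a set) S nrm \<omega> g\<omega> f F gradF g (P::'b measure) r L \<sigma> x0 \<eta> xs (T::nat).
         SMD_instance X S nrm \<omega> g\<omega> f F gradF g P r L \<sigma> x0 \<eta> xs \<and> 1 \<le> T
         \<and> (\<forall>t. \<eta> t = (if \<sigma> = 0 then 1 / (2 * L)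
                        else min (1 / (2 * L))
                               (sqrt (lambda0 X \<omega> g\<omega> F r L x0 / (\<sigma>\<^sup>2 * L * real T))))) \<longrightarrow>
         exp_fbe_output X \<omega> g\<omega> gradF r P L \<eta> xs T
           \<le> ennreal (C * (L * lambda0 X \<omega> g\<omega> F r L x0 / real T
                          + sqrt (\<sigma>\<^sup>2 * L * lambda0 X \<omega> g\<omega> F r L x0 / real T)))))"
  by (intro conjI exI[of _ "9::real"] allI impI zero_less_numeral; elim conjE;
      rule stochastic_mirror_descent.exp_fbe_output_le[OF SMD_instance_imp_stochastic_mirror_descent]
        stochastic_mirror_descent.exp_fbe_output_constant_step_le[OF SMD_instance_imp_stochastic_mirror_descent];
      assumption)

end
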